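(* Let $0\neq h\in\mathbb{F}[x]$, regard $A_h\subseteq A_1$ via $x\mapsto x$, $\hat y\mapsto yh$, and let $C_{A_h}(x)=\{a\in A_h: ax=xa\}$. (i) If $\mathrm{char}(\mathbb{F})=0$, then $C_{A_h}(x)=\mathbb{F}[x]$. (ii) If $\mathrm{char}(\mathbb{F})=p>0$, then: (a) $C_{A_h}(x)=\mathbb{F}[x,h^py^p]=\bigoplus_{i\equiv 0 \bmod p}\mathbb{F}[x]\,h^iy^i$; (b) $[x,A_h]=\bigoplus_{i\not\equiv -1\bmod p}h\,\mathbb{F}[x]\,h^iy^i=\bigoplus_{i=0}^{p-2}h\,C_{A_h}(x)\,h^iy^i$; (c) $[\hat y,A_h]=\bigoplus_{i\ge0}\mathrm{im}\!\left(\tfrac{d}{dx}\right)h\,\hat y^i=\bigoplus_{j\not\equiv -1\bmod p}h x^j\,\mathbb{F}[\hat y]$, where $\mathrm{im}(\tfrac{d}{dx})\subseteq\mathbb{F}[x]$ is the image of formal differentiation.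
   Context: For $h\in\mathbb{F}[x]$, $A_h$ is the unital associative $\mathbb{F}$-algebra generated by $x,\hat y$ with defining relation $\hat yx-x\hat y=h$. $A_1$ is the Weyl algebra, generated by $x,y$ with $yx-xy=1$; for $h\ne0$, $x\mapsto x,\ \hat y\mapsto yh$ embeds $A_h$ into $A_1$. For $b\in A_h$, $[b,A_h]=\{ba-ab:a\in A_h\}$. *)

theory Defs
  imports "HOL-Computational_Algebra.Polynomial"
begin

text \<open>The Weyl algebra A_1 over a field F, realised by its normal form basis:
  an element sum_i f_i(x) y^i (f_i in F[x]) is represented by the polynomial in y
  with coefficients in F[x], i.e. by a value of type 'a poly poly whose i-th coefficient
  is f_i.  Addition is polynomial addition; multiplication is determined by yx - xy = 1:
  (f y^i)(g y^j) = sum_k (i choose k) f g^(k) y^(i+j-k).\<close>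

definition wmult :: "'a::field poly poly \<Rightarrow> 'a poly poly \<Rightarrow> 'a poly poly" where
  "wmult P Q = (\<Sum>i\<le>degree P. \<Sum>j\<le>degree Q. \<Sum>k\<le>i.
      monom (of_nat (i choose k) * coeff P i * (pderiv ^^ k) (coeff Q j)) (i + j - k))"

primrec wpow :: "'a::field poly poly \<Rightarrow> nat \<Rightarrow> 'a poly poly" where
  "wpow P 0 = 1"
| "wpow P (Suc n) = wmult P (wpow P n)"

definition W :: "'a::field poly \<Rightarrow> 'a poly poly" where
  "W f = [:f:]"

definition WX :: "'a::field poly poly" where
  "WX = W [:0, 1:]"

definition WY :: "'a::field poly poly" where
  "WY = monom 1 1"

definition yhat :: "'a::field poly \<Rightarrow> 'a poly poly" where
  "yhat h = wmult WY (W h)"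

inductive_set gen_alg :: "'a::field poly poly set \<Rightarrow> 'a poly poly set" for S where
  gen: "s \<in> S \<Longrightarrow> s \<in> gen_alg S"
| one: "1 \<in> gen_alg S"
| scal: "a \<in> gen_alg S \<Longrightarrow> W [:c:] * a \<in> gen_alg S"
| add: "a \<in> gen_alg S \<Longrightarrow> b \<in> gen_alg S \<Longrightarrow> a + b \<in> gen_alg S"
| mult: "a \<in> gen_alg S \<Longrightarrow> b \<in> gen_alg S \<Longrightarrow> wmult a b \<in> gen_alg S"

definition Ah :: "'a::field poly \<Rightarrow> 'a poly poly set" where
  "Ah h = gen_alg {WX, yhat h}"

definition Cx :: "'a::field poly \<Rightarrow> 'a poly poly set" where
  "Cx h = {a \<in> Ah h. wmult a WX = wmult WX a}"

definition commset :: "'a::field poly \<Rightarrow> 'a poly poly \<Rightarrow> 'a poly poly set" where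
  "commset h b = {wmult b a - wmult a b | a. a \<in> Ah h}"

definition sum_family :: "(nat \<Rightarrow> 'b::comm_monoid_add set) \<Rightarrow> 'b set" where
  "sum_family V = {a. \<exists>n v. (\<forall>i<n. v i \<in> V i) \<and> a = (\<Sum>i<n. v i)}"

definition indep_family :: "(nat \<Rightarrow> 'b::comm_monoid_add set) \<Rightarrow> bool" where
  "indep_family V \<longleftrightarrow> (\<forall>n v. (\<forall>i<n. v i \<in> V i) \<longrightarrow> (\<Sum>i<n. v i) = 0 \<longrightarrow> (\<forall>i<n. v i = 0))"

definition is_dsum :: "'b::comm_monoid_add set \<Rightarrow> (nat \<Rightarrow> 'b set) \<Rightarrow> bool" where
  "is_dsum M V \<longleftrightarrow> M = sum_family V \<and> indep_family V"

end

theory Submission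
  imports Defs
begin

(* Left multiplication by y acts as  ymul Q = y Q + dQ/dx  (x-derivative taken
   coefficientwise), and the Weyl product is  P Q = sum_i P_i . ymul^i Q;  the ring laws follow.

   1. A_h = {P. h^i divides P_i for all i} (hdiv h): this set is a subalgebra containing x and
      y-hat, and conversely each of its elements is  sum_i F_i(x) y-hat^i  (the leading y-coefficient
      of y-hat^n is h^n).  These "y-hat coordinates" are injective and additive.
   2. The y-coefficients of [P, x] are (n+1) P_(n+1).  Hence C(x) consists of the elements of A_h
      supported in y-degrees divisible by p = char F (part (i) when p = 0), and [x, A_h] has an
      explicit coefficientwise description xcomm_nf h.
   3. y^p is central, so such sparse elements multiply as ordinary polynomials; this gives
      C(x) = F[x, h^p y^p].
   4. Direct sums are verified by explicit projections: by y-degree (or its residue mod p) for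
      (a) and (b); for (c) the same is done in y-hat coordinates and transported along the
      injective map of step 1.  The final theorem just collects the parts. *)

section \<open>Multiplication in the Weyl algebra\<close>

text \<open>Left multiplication by y on normal forms: y (f y^n) = f y^(n+1) + f' y^n.\<close>
definition ymul :: "'a::field poly poly \<Rightarrow> 'a poly poly" where
  "ymul Q = pCons 0 Q + map_poly pderiv Q"

lemma coeff_ymul: "coeff (ymul Q) n = (if n = 0 then 0 else coeff Q (n - 1)) + pderiv (coeff Q n)"
  by (simp add: ymul_def coeff_map_poly coeff_pCons split: nat.split)

lemma ymul_add: "ymul (P + Q) = ymul P + ymul Q"
  by (rule poly_eqI) (simp add: coeff_ymul pderiv_add)

lemma ymul_0 [simp]: "ymul 0 = 0"
  by (rule poly_eqI) (simp add: coeff_ymul)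

lemma ymul_monom: "ymul (monom c n) = monom c (Suc n) + monom (pderiv c) n"
  by (rule poly_eqI) (auto simp: coeff_ymul coeff_monom)

lemma ymul_smult: "ymul (smult f S) = smult f (ymul S) + smult (pderiv f) S"
  by (rule poly_eqI) (simp add: coeff_ymul pderiv_mult algebra_simps)

lemma ymul_pCons: "ymul (pCons a Q) = pCons (pderiv a) ([:a:] + ymul Q)"
  by (rule poly_eqI) (simp add: coeff_ymul coeff_pCons split: nat.split)

lemma ymul_pow_add: "(ymul ^^ i) (P + Q) = (ymul ^^ i) P + (ymul ^^ i) Q"
  by (induct i) (auto simp: ymul_add)

lemma ymul_pow_0 [simp]: "(ymul ^^ i) 0 = 0"
  by (induct i) auto

lemma ymul_pow_smult_const: "(ymul ^^ i) (smult [:c:] S) = smult [:c:] ((ymul ^^ i) S)"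
  by (induct i) (simp_all add: ymul_smult)

lemma ymul_pow_sum: "(ymul ^^ i) (\<Sum>j\<in>A. f j) = (\<Sum>j\<in>A. (ymul ^^ i) (f j))"
  using sum_comp_morphism[of "ymul ^^ i" f A] by (simp add: ymul_pow_add o_def)

lemma smult_sum_right: "smult a (\<Sum>j\<in>A. f j) = (\<Sum>j\<in>A. smult a (f j))"
  using sum_comp_morphism[of "smult a" f A] by (simp add: smult_add_right o_def)

text \<open>Leibniz' formula: y^i (q y^j) = sum_k (i choose k) q^(k) y^(i+j-k).  This is the formula
  used to define the Weyl product, so it connects the definition to iterated ymul.\<close>
lemma ymul_pow_monom:
  "(ymul ^^ i) (monom q j) = (\<Sum>k\<le>i. monom (of_nat (i choose k) * (pderiv ^^ k) q) (i + j - k))"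
proof (induct i)
  case 0
  then show ?case by simp
next
  case (Suc i)
  define f where "f k = (of_nat (i choose k) * (pderiv ^^ k) q :: 'a poly)" for k
  have shift_down: "(\<Sum>k\<le>Suc i. monom (f k) (Suc i + j - k)) = (\<Sum>k\<le>i. monom (f k) (Suc (i + j - k)))"
    by (simp add: f_def binomial_eq_0, intro sum.cong refl) (simp add: Suc_diff_le)
  have shift_index: "(\<Sum>k\<le>Suc i. monom (f k) (Suc i + j - k))
      = monom q (Suc (i + j)) + (\<Sum>k\<le>i. monom (f (Suc k)) (i + j - k))"
    by (subst sum.atMost_Suc_shift) (simp add: f_def)
  have "(ymul ^^ Suc i) (monom q j) = (\<Sum>k\<le>i. ymul (monom (f k) (i + j - k)))"
    using Suc by (simp add: f_def sum_comp_morphism[of ymul, symmetric] ymul_add o_def)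
  also have "\<dots> = (\<Sum>k\<le>i. monom (f k) (Suc (i + j - k))) + (\<Sum>k\<le>i. monom (pderiv (f k)) (i + j - k))"
    by (simp add: ymul_monom sum.distrib)
  also have "\<dots> = monom q (Suc (i + j)) + (\<Sum>k\<le>i. monom (f (Suc k)) (i + j - k))
       + (\<Sum>k\<le>i. monom (pderiv (f k)) (i + j - k))"
    using shift_down shift_index by simp
  also have "\<dots> = monom q (Suc (i + j))
       + (\<Sum>k\<le>i. monom (of_nat (Suc i choose Suc k) * (pderiv ^^ Suc k) q) (i + j - k))"
    by (simp add: f_def add.assoc sum.distrib[symmetric] add_monom pderiv_mult distrib_right
        pderiv_of_nat algebra_simps)
  also have "\<dots> = (\<Sum>k\<le>Suc i. monom (of_nat (Suc i choose k) * (pderiv ^^ k) q) (Suc i + j - k))"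
    by (subst sum.atMost_Suc_shift) simp
  finally show ?case .
qed

lemma wmult_expand: "wmult P Q = (\<Sum>i\<le>degree P. smult (coeff P i) ((ymul ^^ i) Q))"
proof -
  have "(ymul ^^ i) Q = (ymul ^^ i) (\<Sum>j\<le>degree Q. monom (coeff Q j) j)" for i
    by (simp add: poly_as_sum_of_monoms)
  then have "(ymul ^^ i) Q = (\<Sum>j\<le>degree Q. \<Sum>k\<le>i.
      monom (of_nat (i choose k) * (pderiv ^^ k) (coeff Q j)) (i + j - k))" for i
    by (simp add: ymul_pow_sum ymul_pow_monom)
  then show ?thesis unfolding wmult_def
    by (simp add: smult_sum_right smult_monom ac_simps)
qed

lemma wmult_expand_bound:
  assumes "degree P < n"
  shows "wmult P Q = (\<Sum>i<n. smult (coeff P i) ((ymul ^^ i) Q))"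
proof -
  have "wmult P Q = (\<Sum>i<Suc (degree P). smult (coeff P i) ((ymul ^^ i) Q))"
    by (simp add: wmult_expand lessThan_Suc_atMost)
  also have "\<dots> = (\<Sum>i<n. smult (coeff P i) ((ymul ^^ i) Q))"
    using assms by (intro sum.mono_neutral_left) (auto simp: coeff_eq_0)
  finally show ?thesis .
qed

text \<open>Recursion on the left factor: (a + y P) Q = a Q + P (y Q) -- the key to all ring laws.\<close>
lemma wmult_pCons: "wmult (pCons a P) Q = smult a Q + wmult P (ymul Q)"
proof -
  have "wmult (pCons a P) Q = (\<Sum>i<Suc (Suc (degree P)). smult (coeff (pCons a P) i) ((ymul ^^ i) Q))"
    by (rule wmult_expand_bound) auto
  also have "\<dots> = smult a Q + (\<Sum>i<Suc (degree P). smult (coeff P i) ((ymul ^^ i) (ymul Q)))"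
    by (subst sum.lessThan_Suc_shift) (simp add: funpow_Suc_right del: funpow.simps)
  also have "\<dots> = smult a Q + wmult P (ymul Q)"
    by (subst wmult_expand_bound[of P "Suc (degree P)"]) auto
  finally show ?thesis .
qed

lemma wmult_0_left [simp]: "wmult 0 Q = 0"
  by (simp add: wmult_expand)

lemma wmult_0_right [simp]: "wmult P 0 = 0"
  by (simp add: wmult_expand)

lemma wmult_const: "wmult [:a:] Q = smult a Q"
  by (simp add: wmult_pCons)

lemma wmult_1_left [simp]: "wmult 1 Q = Q"
  by (metis one_pCons smult_1_left wmult_const)

lemma wmult_add_right: "wmult P (Q + R) = wmult P Q + wmult P R"
  by (simp add: wmult_expand ymul_pow_add smult_add_right sum.distrib)

lemma wmult_add_left: "wmult (P + Q) R = wmult P R + wmult Q R"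
proof (induct P arbitrary: Q R rule: pCons_induct)
  case 0
  then show ?case by simp
next
  case (pCons a P)
  obtain b Q' where Q: "Q = pCons b Q'" by (cases Q) auto
  show ?case using pCons(2)[of Q' "ymul R"]
    by (simp add: Q wmult_pCons smult_add_left algebra_simps)
qed

lemma wmult_sum_right: "wmult P (\<Sum>i\<in>A. f i) = (\<Sum>i\<in>A. wmult P (f i))"
  using sum_comp_morphism[of "wmult P" f A] by (simp add: wmult_add_right o_def)

lemma wmult_sum_left: "wmult (\<Sum>i\<in>A. f i) Q = (\<Sum>i\<in>A. wmult (f i) Q)"
  using sum_comp_morphism[of "\<lambda>P. wmult P Q" f A] by (simp add: wmult_add_left o_def)

lemma wmult_smult_left: "wmult (smult f P) Q = smult f (wmult P Q)"
  by (induct P arbitrary: Q rule: pCons_induct) (simp_all add: wmult_pCons smult_add_right)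

lemma wmult_smult_const_right: "wmult P (smult [:c:] Q) = smult [:c:] (wmult P Q)"
  by (simp add: wmult_expand ymul_pow_smult_const smult_sum_right mult.commute)

lemma ymul_wmult: "ymul (wmult Q R) = wmult (ymul Q) R"
proof (induct Q arbitrary: R rule: pCons_induct)
  case 0
  then show ?case by simp
next
  case (pCons a Q)
  show ?case using pCons(2)[of "ymul R"]
    by (simp add: wmult_pCons ymul_pCons ymul_add ymul_smult wmult_add_left wmult_const algebra_simps)
qed

lemma wmult_assoc: "wmult (wmult P Q) R = wmult P (wmult Q R)"
proof (induct P arbitrary: Q R rule: pCons_induct)
  case 0
  then show ?case by simp
next
  case (pCons a P)
  show ?case using pCons(2)[of "ymul Q" R]
    by (simp add: wmult_pCons wmult_add_left wmult_smult_left ymul_wmult)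
qed

lemma wmult_W: "wmult (W f) Q = smult f Q"
  by (simp add: W_def wmult_const)

lemma wmult_WX: "wmult WX Q = smult [:0, 1:] Q"
  by (simp add: WX_def wmult_W)

lemma wpow_WX: "wpow WX j = W (monom 1 j)"
  by (induct j) (simp_all add: wmult_WX W_def monom_Suc one_pCons)

lemma wmult_WY: "wmult WY Q = ymul Q"
proof -
  have "WY = pCons 0 (1 :: 'a poly poly)" by (simp add: WY_def monom_Suc)
  then show ?thesis by (metis add_0 smult_0_left wmult_1_left wmult_pCons)
qed

lemma wpow_WY: "wpow WY i = monom 1 i"
  by (induct i) (simp_all add: wmult_WY ymul_monom)

lemma ymul_pow_eq_wmult: "(ymul ^^ i) Q = wmult (monom 1 i) Q"
  by (induct i) (simp_all add: ymul_wmult ymul_monom)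

lemma wmult_monom1_right: "wmult Q (monom 1 j) = Q * monom 1 j"
proof -
  have shift: "(ymul ^^ i) (monom 1 j) = monom 1 (i + j)" for i
    by (induct i) (simp_all add: ymul_monom)
  have "wmult Q (monom 1 j) = (\<Sum>i\<le>degree Q. monom (coeff Q i) i * monom 1 j)"
    by (simp add: wmult_expand shift smult_monom mult_monom)
  also have "\<dots> = Q * monom 1 j"
    by (simp add: sum_distrib_right[symmetric] poly_as_sum_of_monoms)
  finally show ?thesis .
qed

lemma wmult_1_right [simp]: "wmult Q 1 = Q"
  using wmult_monom1_right[of Q 0] by simp

lemma wpow_Suc_right: "wmult (wpow P n) P = wpow P (Suc n)"
  by (induct n) (simp_all add: wmult_assoc)

lemma yhat_eq: "yhat h = [:pderiv h, h:]"
  by (simp add: yhat_def wmult_WY W_def ymul_pCons)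

lemma wmult_yhat: "wmult (yhat h) Q = smult (pderiv h) Q + smult h (ymul Q)"
  by (simp add: yhat_eq wmult_pCons wmult_const)

lemma yhat_1: "yhat (1::'a::field poly) = WY"
  by (simp add: yhat_eq WY_def monom_Suc one_pCons monom_0)

lemma comm_WX_pCons:
  "wmult (pCons a P) WX - wmult WX (pCons a P) = P + pCons 0 (wmult P WX - wmult WX P)"
proof -
  have ymul_WX: "ymul WX = 1 + wmult WX WY"
    by (simp add: WX_def W_def ymul_pCons wmult_WY WY_def monom_Suc one_pCons pderiv_pCons
        wmult_const monom_0)
  have "wmult (wmult P WX) WY = pCons 0 (wmult P WX)"
    using wmult_monom1_right[of "wmult P WX" 1] by (simp add: WY_def monom_Suc)
  then have "wmult P (ymul WX) = P + pCons 0 (wmult P WX)"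
    unfolding ymul_WX wmult_add_right wmult_assoc[symmetric] by simp
  then show ?thesis
    unfolding wmult_pCons wmult_WX
    by (simp add: WX_def W_def poly_eq_iff coeff_pCons split: nat.split)
qed

lemma coeff_comm_WX:
  "coeff (wmult P WX - wmult WX P) n = smult (of_nat (Suc n)) (coeff P (Suc n))"
proof -
  have "coeff (wmult P WX - wmult WX P) n = of_nat (Suc n) * coeff P (Suc n)"
  proof (induct P arbitrary: n rule: pCons_induct)
    case 0
    then show ?case by simp
  next
    case (pCons a P)
    show ?case using pCons(2)[of "n - 1"]
      by (cases n) (simp_all add: comm_WX_pCons coeff_pCons algebra_simps)
  qed
  then show ?thesis by (simp add: of_nat_poly)
qed

section \<open>The subalgebra A_h in normal form\<close>

text \<open>Normal forms whose i-th y-coefficient is divisible by h^i; this will turn out to be A_h.\<close>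
definition hdiv :: "'a::field poly \<Rightarrow> 'a poly poly set" where
  "hdiv h = {P. \<forall>i. h ^ i dvd coeff P i}"

text \<open>The weaker condition h^(n-m) | Q_n; applying y lowers the exponent by one.\<close>
definition hdiv_from :: "'a::field poly \<Rightarrow> nat \<Rightarrow> 'a poly poly \<Rightarrow> bool" where
  "hdiv_from h m Q \<longleftrightarrow> (\<forall>n. h ^ (n - m) dvd coeff Q n)"

lemma hdiv_iff_from_0: "P \<in> hdiv h \<longleftrightarrow> hdiv_from h 0 P"
  by (simp add: hdiv_def hdiv_from_def)

lemma dvd_pderiv_pow:
  assumes "h ^ k dvd f" shows "h ^ (k - 1) dvd pderiv f"
proof (cases k)
  case 0
  then show ?thesis by simp
next
  case (Suc m)
  from assms obtain g where g: "f = h ^ Suc m * g" using Suc by (auto elim: dvdE)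
  have "pderiv f = h ^ m * (h * pderiv g + smult (of_nat (Suc m)) (g * pderiv h))"
    unfolding g pderiv_mult pderiv_power_Suc by (simp add: algebra_simps)
  then show ?thesis using Suc by simp
qed

lemma ymul_hdiv_from: "hdiv_from h m Q \<Longrightarrow> hdiv_from h (Suc m) (ymul Q)"
  unfolding hdiv_from_def
proof (intro allI)
  fix n assume Q: "\<forall>n. h ^ (n - m) dvd coeff Q n"
  have e: "n - Suc m = n - m - 1" "n - Suc m = n - 1 - m" by arith+
  have "h ^ (n - Suc m) dvd pderiv (coeff Q n)"
    using dvd_pderiv_pow[OF Q[rule_format, of n]] by (subst e(1))
  moreover have "h ^ (n - Suc m) dvd (if n = 0 then 0 else coeff Q (n - 1))"
    using Q[rule_format, of "n - 1"] by (subst e(2)) simp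
  ultimately show "h ^ (n - Suc m) dvd coeff (ymul Q) n"
    unfolding coeff_ymul by (simp add: dvd_add)
qed

lemma ymul_pow_hdiv_from: "hdiv_from h m Q \<Longrightarrow> hdiv_from h (m + i) ((ymul ^^ i) Q)"
  by (induct i) (simp_all add: ymul_hdiv_from)

lemma smult_hdiv_from:
  assumes "h ^ i dvd f" "hdiv_from h i X" shows "smult f X \<in> hdiv h"
  unfolding hdiv_def
proof (intro CollectI allI)
  fix n
  show "h ^ n dvd coeff (smult f X) n"
  proof (cases "n \<le> i")
    case True
    then have "h ^ n dvd f" using assms(1) le_imp_power_dvd dvd_trans by blast
    then show ?thesis by (simp add: dvd_mult2)
  next
    case False
    have "h ^ n = h ^ i * h ^ (n - i)" using False by (simp flip: power_add)
    then show ?thesis using assms False unfolding hdiv_from_def by (simp add: mult_dvd_mono)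
  qed
qed

lemma hdiv_add: "P \<in> hdiv h \<Longrightarrow> Q \<in> hdiv h \<Longrightarrow> P + Q \<in> hdiv h"
  by (simp add: hdiv_def)

lemma hdiv_diff: "P \<in> hdiv h \<Longrightarrow> Q \<in> hdiv h \<Longrightarrow> P - Q \<in> hdiv h"
  by (simp add: hdiv_def dvd_diff)

lemma hdiv_smult: "P \<in> hdiv h \<Longrightarrow> smult f P \<in> hdiv h"
  by (simp add: hdiv_def)

lemma hdiv_sum: "(\<And>i. i \<in> A \<Longrightarrow> f i \<in> hdiv h) \<Longrightarrow> sum f A \<in> hdiv h"
  by (simp add: hdiv_def coeff_sum dvd_sum)

lemma hdiv_monom: "h ^ i dvd c \<Longrightarrow> monom c i \<in> hdiv h"
  by (auto simp: hdiv_def coeff_monom)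

lemma hdiv_W: "W f \<in> hdiv h"
  unfolding hdiv_def W_def by (auto simp: coeff_pCons split: nat.split)

text \<open>Closure under the Weyl product: in P Q = sum_i P_i . y^i Q the factor h^i | P_i
  compensates the loss of i powers of h caused by y^i.\<close>
lemma hdiv_wmult:
  assumes "P \<in> hdiv h" "Q \<in> hdiv h" shows "wmult P Q \<in> hdiv h"
proof -
  have "smult (coeff P i) ((ymul ^^ i) Q) \<in> hdiv h" for i
  proof (rule smult_hdiv_from)
    show "h ^ i dvd coeff P i" using assms(1) by (simp add: hdiv_def)
    show "hdiv_from h i ((ymul ^^ i) Q)"
      using ymul_pow_hdiv_from[of h 0 Q i] assms(2) by (simp add: hdiv_iff_from_0)
  qed
  then show ?thesis unfolding wmult_expand by (intro hdiv_sum)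
qed

lemma gen_alg_0: "0 \<in> gen_alg T"
proof -
  have "W [:0:] * 1 \<in> gen_alg T" by (intro gen_alg.scal gen_alg.one)
  then show ?thesis by (simp add: W_def)
qed

lemma gen_alg_sum: "(\<And>i. i \<in> A \<Longrightarrow> f i \<in> gen_alg T) \<Longrightarrow> sum f A \<in> gen_alg T"
  by (induct A rule: infinite_finite_induct) (auto intro: gen_alg.add gen_alg_0)

lemma gen_alg_wpow: "s \<in> T \<Longrightarrow> wpow s n \<in> gen_alg T"
  by (induct n) (auto intro: gen_alg.mult gen_alg.gen gen_alg.one)

lemma gen_alg_W:
  assumes "WX \<in> T" shows "W f \<in> gen_alg T"
proof (induct f rule: pCons_induct)
  case 0
  then show ?case using gen_alg_0 by (simp add: W_def)
next
  case (pCons c f)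
  have "W [:c:] * 1 \<in> gen_alg T" by (intro gen_alg.scal gen_alg.one)
  moreover have "wmult WX (W f) \<in> gen_alg T" using gen_alg.mult[OF gen_alg.gen[OF assms] pCons(2)] .
  ultimately have "W [:c:] * 1 + wmult WX (W f) \<in> gen_alg T" by (rule gen_alg.add)
  moreover have "W [:c:] * 1 + wmult WX (W f) = W (pCons c f)"
    by (simp add: wmult_WX W_def)
  ultimately show ?case by simp
qed

lemma gen_alg_smult:
  assumes "WX \<in> T" "X \<in> gen_alg T" shows "smult f X \<in> gen_alg T"
proof -
  have "wmult (W f) X \<in> gen_alg T" using assms gen_alg_W by (intro gen_alg.mult)
  then show ?thesis by (simp add: wmult_W)
qed

lemma Ah_subset_hdiv: "Ah h \<subseteq> hdiv h"
proof
  fix P assume "P \<in> Ah h"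
  then show "P \<in> hdiv h" unfolding Ah_def
  proof induct
    case (gen s)
    have "h ^ i dvd coeff WX i" for i
      by (cases i) (simp_all add: WX_def W_def)
    moreover have "h ^ i dvd coeff (yhat h) i" for i
      by (cases i; cases "i - 1") (simp_all add: yhat_eq)
    ultimately show ?case using gen by (auto simp: hdiv_def)
  next
    case one
    then show ?case by (simp add: hdiv_def coeff_1)
  next
    case (scal a c)
    then show ?case by (simp add: W_def hdiv_smult)
  next
    case (add a b)
    then show ?case by (simp add: hdiv_add)
  next
    case (mult a b)
    then show ?case by (simp add: hdiv_wmult)
  qed
qed

lemma coeff_wpow_yhat:
  "(\<forall>k>n. coeff (wpow (yhat h) n) k = 0) \<and> coeff (wpow (yhat h) n) n = h ^ n"
proof (induct n)
  case 0
  then show ?case by (simp add: coeff_1)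
next
  case (Suc n)
  define Y where "Y = wpow (yhat h) n"
  have Y: "\<And>k. n < k \<Longrightarrow> coeff Y k = 0" "coeff Y n = h ^ n" using Suc by (auto simp: Y_def)
  have "wpow (yhat h) (Suc n) = smult (pderiv h) Y + smult h (ymul Y)"
    by (simp add: Y_def wmult_yhat)
  then show ?case by (simp add: coeff_ymul Y)
qed

definition yhat_eval :: "'a::field poly \<Rightarrow> 'a poly poly \<Rightarrow> 'a poly poly" where
  "yhat_eval h F = (\<Sum>i\<le>degree F. smult (coeff F i) (wpow (yhat h) i))"

lemma yhat_eval_bound:
  assumes "degree F < n"
  shows "yhat_eval h F = (\<Sum>i<n. smult (coeff F i) (wpow (yhat h) i))"
proof -
  have "yhat_eval h F = (\<Sum>i<Suc (degree F). smult (coeff F i) (wpow (yhat h) i))"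
    by (simp add: yhat_eval_def lessThan_Suc_atMost)
  also have "\<dots> = (\<Sum>i<n. smult (coeff F i) (wpow (yhat h) i))"
    using assms by (intro sum.mono_neutral_left) (auto simp: coeff_eq_0)
  finally show ?thesis .
qed

lemma yhat_eval_0 [simp]: "yhat_eval h 0 = 0"
  by (simp add: yhat_eval_def)

lemma yhat_eval_add: "yhat_eval h (F + G) = yhat_eval h F + yhat_eval h G"
proof -
  define n where "n = Suc (degree F + degree G)"
  have "degree (F + G) < n" unfolding n_def using degree_add_le_max[of F G] by simp
  then show ?thesis
    by (simp add: yhat_eval_bound[of _ n] n_def smult_add_left sum.distrib)
qed

lemma yhat_eval_smult: "yhat_eval h (smult f F) = smult f (yhat_eval h F)"
proof -
  have "degree (smult f F) < Suc (degree F)" using degree_smult_le[of f F] by simp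
  then have lhs: "yhat_eval h (smult f F)
      = (\<Sum>i<Suc (degree F). smult (coeff (smult f F) i) (wpow (yhat h) i))"
    by (rule yhat_eval_bound)
  have rhs: "yhat_eval h F = (\<Sum>i<Suc (degree F). smult (coeff F i) (wpow (yhat h) i))"
    by (rule yhat_eval_bound) simp
  show ?thesis unfolding lhs rhs smult_sum_right by simp
qed

lemma yhat_eval_monom: "yhat_eval h (monom c i) = smult c (wpow (yhat h) i)"
proof -
  have "degree (monom c i) < Suc i" using degree_monom_le[of c i] by simp
  then show ?thesis by (simp add: yhat_eval_bound[of _ "Suc i"] coeff_monom)
qed

lemma yhat_eval_pCons: "yhat_eval h (pCons a F) = smult a 1 + wmult (yhat_eval h F) (yhat h)"
proof -
  let ?d = "degree F"
  have "degree (pCons a F) < Suc (Suc ?d)" by simp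
  then have "yhat_eval h (pCons a F)
      = (\<Sum>i<Suc (Suc ?d). smult (coeff (pCons a F) i) (wpow (yhat h) i))"
    by (rule yhat_eval_bound)
  also have "\<dots> = smult a 1 + (\<Sum>i<Suc ?d. smult (coeff F i) (wpow (yhat h) (Suc i)))"
    by (subst sum.lessThan_Suc_shift) simp
  also have "(\<Sum>i<Suc ?d. smult (coeff F i) (wpow (yhat h) (Suc i)))
      = (\<Sum>i<Suc ?d. wmult (smult (coeff F i) (wpow (yhat h) i)) (yhat h))"
    by (intro sum.cong refl) (simp only: wmult_smult_left wpow_Suc_right)
  also have "\<dots> = wmult (yhat_eval h F) (yhat h)"
    by (simp only: wmult_sum_left[symmetric] yhat_eval_bound[of F "Suc ?d", OF lessI])
  finally show ?thesis .
qed

text \<open>Injectivity: the top y-coefficient of yhat_eval h F is (lead coeff of F) * h^(degree F).\<close>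
lemma yhat_eval_eq_0:
  assumes h: "h \<noteq> 0" and z: "yhat_eval h F = 0"
  shows "F = 0"
proof (rule ccontr)
  assume F: "F \<noteq> 0"
  define d where "d = degree F"
  have "coeff (yhat_eval h F) d = (\<Sum>i\<le>d. coeff F i * coeff (wpow (yhat h) i) d)"
    by (simp add: yhat_eval_def d_def coeff_sum)
  also have "\<dots> = (\<Sum>i\<le>d. if i = d then coeff F d * h ^ d else 0)"
    using coeff_wpow_yhat[of _ h] by (intro sum.cong refl) auto
  also have "\<dots> = coeff F d * h ^ d" by simp
  finally have "coeff F d * h ^ d = 0" using z by simp
  moreover have "coeff F d \<noteq> 0" using F by (simp add: d_def)
  ultimately show False using h by simp
qed

lemma yhat_eval_in_Ah: "yhat_eval h F \<in> Ah h"
  unfolding yhat_eval_def Ah_def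
  by (intro gen_alg_sum gen_alg_smult gen_alg_wpow) auto

text \<open>Every element of hdiv h has a y-hat normal form: subtract a multiple of y-hat^n to kill the
  leading y-coefficient (divisible by h^n) and recurse on the degree.\<close>
lemma hdiv_yhat_eval:
  "P \<in> hdiv h \<Longrightarrow> \<exists>F. P = yhat_eval h F"
proof (induct "degree P" arbitrary: P rule: less_induct)
  case less
  show ?case
  proof (cases "degree P")
    case 0
    then have "P = yhat_eval h (monom (coeff P 0) 0)"
      using degree_0_id[of P] by (simp add: yhat_eval_monom)
    then show ?thesis by blast
  next
    case (Suc n)
    define Y where "Y = wpow (yhat h) (Suc n)"
    have "Y \<in> Ah h" unfolding Y_def Ah_def by (rule gen_alg_wpow) simp
    then have Y: "Y \<in> hdiv h" using Ah_subset_hdiv by blast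
    obtain a where a: "coeff P (Suc n) = h ^ Suc n * a"
      using less(2) unfolding hdiv_def by blast
    define R where "R = P - smult a Y"
    have "R \<in> hdiv h" unfolding R_def using less(2) Y by (intro hdiv_diff hdiv_smult)
    moreover have "degree R < degree P"
    proof -
      have "coeff R k = 0" if "n < k" for k
      proof (cases "k = Suc n")
        case True
        then show ?thesis using a coeff_wpow_yhat[of "Suc n" h] by (simp add: R_def Y_def)
      next
        case False
        then have "Suc n < k" using that by simp
        then show ?thesis using \<open>degree P = Suc n\<close> coeff_wpow_yhat[of "Suc n" h]
          by (simp add: R_def Y_def coeff_eq_0)
      qed
      then show ?thesis using \<open>degree P = Suc n\<close> degree_le by fastforce
    qed
    ultimately obtain G where G: "R = yhat_eval h G" using less(1) by blast
    have "P = R + smult a Y" by (simp add: R_def)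
    also have "\<dots> = yhat_eval h (G + monom a (Suc n))"
      by (simp add: G yhat_eval_add yhat_eval_monom Y_def)
    finally show ?thesis by blast
  qed
qed

theorem Ah_eq_hdiv: "Ah h = hdiv h"
  using Ah_subset_hdiv hdiv_yhat_eval yhat_eval_in_Ah by blast

lemma Ah_yhat_eval: "P \<in> Ah h \<Longrightarrow> \<exists>F. P = yhat_eval h F"
  using Ah_subset_hdiv hdiv_yhat_eval by blast

section \<open>The centralizer of x\<close>

text \<open>Normal forms supported in y-degrees divisible by the characteristic p (in characteristic 0:
  in degree 0 only).\<close>
definition char_sparse :: "'a::field poly poly \<Rightarrow> bool" where
  "char_sparse P \<longleftrightarrow> (\<forall>i. \<not> CHAR('a) dvd i \<longrightarrow> coeff P i = 0)"

text \<open>Since [P, x] has coefficients (n+1) P_(n+1), P commutes with x iff it is char-sparse.\<close>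
lemma commutes_WX_iff: "wmult P WX = wmult WX P \<longleftrightarrow> char_sparse P"
proof -
  have "wmult P WX = wmult WX P \<longleftrightarrow> (\<forall>n. coeff (wmult P WX - wmult WX P) n = 0)"
    by (simp add: poly_eq_iff)
  also have "\<dots> \<longleftrightarrow> (\<forall>n. of_nat (Suc n) = (0::'a) \<or> coeff P (Suc n) = 0)"
    unfolding coeff_comm_WX by simp
  also have "\<dots> \<longleftrightarrow> (\<forall>i. i \<noteq> 0 \<longrightarrow> of_nat i = (0::'a) \<or> coeff P i = 0)"
    by (metis not0_implies_Suc nat.distinct(1))
  also have "\<dots> \<longleftrightarrow> char_sparse P"
    unfolding char_sparse_def of_nat_eq_0_iff_char_dvd by (metis dvd_0_right)
  finally show ?thesis .
qed

theorem Cx_eq: "Cx h = {P. P \<in> hdiv h \<and> char_sparse P}"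
  unfolding Cx_def Ah_eq_hdiv commutes_WX_iff by simp

theorem Cx_char_0:
  assumes "CHAR('a) = 0"
  shows "Cx (h :: 'a::field poly) = {W f | f. True}"
proof -
  have "char_sparse P \<longleftrightarrow> P = W (coeff P 0)" for P :: "'a poly poly"
    unfolding char_sparse_def assms
    by (auto simp: W_def poly_eq_iff coeff_pCons gr0_conv_Suc split: nat.split)
  then show ?thesis unfolding Cx_eq using hdiv_W by (auto simp: W_def)
qed

text \<open>x and y generate A_1 (the case h = 1 of Ah_eq_hdiv).\<close>
lemma gen_alg_WX_WY: "gen_alg {WX, WY :: 'a::field poly poly} = UNIV"
proof -
  have "gen_alg {WX, WY :: 'a poly poly} = Ah 1" by (simp add: Ah_def yhat_1)
  then show ?thesis by (simp add: Ah_eq_hdiv hdiv_def)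
qed

text \<open>y^p is central in A_1: it commutes with x because p = 0 in F, and trivially with y.\<close>
lemma y_char_central:
  fixes Q :: "'a::field poly poly"
  shows "wmult (monom 1 CHAR('a)) Q = wmult Q (monom 1 CHAR('a))"
proof -
  define Z :: "'a poly poly" where "Z = monom 1 CHAR('a)"
  have "Q \<in> gen_alg {WX, WY}" using gen_alg_WX_WY by blast
  then have "wmult Z Q = wmult Q Z"
  proof induct
    case (gen s)
    have "char_sparse Z" by (simp add: char_sparse_def Z_def coeff_monom)
    then have "wmult Z WX = wmult WX Z" by (simp add: commutes_WX_iff)
    moreover have "wmult Z WY = wmult WY Z"
      by (simp add: wmult_WY Z_def ymul_monom WY_def wmult_monom1_right mult_monom)
    ultimately show ?case using gen by auto
  next
    case one
    then show ?case by simp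
  next
    case (scal a c)
    then show ?case by (simp add: W_def wmult_smult_left wmult_smult_const_right)
  next
    case (add a b)
    then show ?case by (simp add: wmult_add_left wmult_add_right)
  next
    case (mult a b)
    then show ?case by (metis wmult_assoc)
  qed
  then show ?thesis by (simp add: Z_def)
qed

lemma y_pow_central:
  fixes Q :: "'a::field poly poly"
  assumes "CHAR('a) dvd i"
  shows "wmult (monom 1 i) Q = Q * monom 1 i"
proof -
  obtain m where i: "i = CHAR('a) * m" using assms by blast
  have "wmult (monom 1 (CHAR('a) * m)) Q = wmult Q (monom 1 (CHAR('a) * m))" for Q :: "'a poly poly"
  proof (induct m arbitrary: Q)
    case 0
    then show ?case by simp
  next
    case (Suc m)
    define Z :: "'a poly poly" where "Z = monom 1 CHAR('a)"
    define M :: "'a poly poly" where "M = monom 1 (CHAR('a) * m)"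
    have split: "monom 1 (CHAR('a) * Suc m) = wmult Z M"
      by (simp add: Z_def M_def y_char_central wmult_monom1_right mult_monom algebra_simps)
    have "wmult Z X = wmult X Z" for X unfolding Z_def by (rule y_char_central)
    moreover have "wmult M X = wmult X M" for X unfolding M_def by (rule Suc)
    ultimately show ?case unfolding split by (metis wmult_assoc)
  qed
  then show ?thesis by (simp add: i wmult_monom1_right)
qed

lemma wmult_char_sparse:
  assumes "char_sparse c"
  shows "wmult c Q = c * Q"
proof -
  have "smult (coeff c i) ((ymul ^^ i) Q) = monom (coeff c i) i * Q" for i
  proof (cases "CHAR('a) dvd i")
    case True
    then show ?thesis
      by (simp add: ymul_pow_eq_wmult y_pow_central mult.commute[of Q] smult_monom_mult)
  next
    case False
    then show ?thesis using assms by (simp add: char_sparse_def)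
  qed
  then have "wmult c Q = (\<Sum>i\<le>degree c. monom (coeff c i) i) * Q"
    by (simp add: wmult_expand sum_distrib_right)
  then show ?thesis by (simp add: poly_as_sum_of_monoms)
qed

lemma char_sparse_mult: "char_sparse P \<Longrightarrow> char_sparse Q \<Longrightarrow> char_sparse (P * Q)"
  unfolding char_sparse_def
proof (intro allI impI)
  fix n assume P: "\<forall>i. \<not> CHAR('a) dvd i \<longrightarrow> coeff P i = 0"
    and Q: "\<forall>i. \<not> CHAR('a) dvd i \<longrightarrow> coeff Q i = 0" and n: "\<not> CHAR('a) dvd n"
  have "coeff P i * coeff Q (n - i) = 0" if "i \<le> n" for i
  proof (cases "CHAR('a) dvd i")
    case True
    then have "\<not> CHAR('a) dvd (n - i)" using n that by (metis dvd_add le_add_diff_inverse)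
    then show ?thesis using Q by simp
  next
    case False
    then show ?thesis using P by simp
  qed
  then show "coeff (P * Q) n = 0" unfolding coeff_mult by (intro sum.neutral) auto
qed

lemma Cx_0: "0 \<in> Cx h"
  unfolding Cx_eq char_sparse_def by (simp add: hdiv_def)

lemma Cx_add: "a \<in> Cx h \<Longrightarrow> b \<in> Cx h \<Longrightarrow> a + b \<in> Cx h"
  unfolding Cx_eq char_sparse_def by (auto simp: hdiv_add)

lemma Cx_wmult: "a \<in> Cx h \<Longrightarrow> b \<in> Cx h \<Longrightarrow> wmult a b \<in> Cx h"
  unfolding Cx_eq using hdiv_wmult wmult_char_sparse char_sparse_mult by fastforce

definition hp_yp :: "'a::field poly \<Rightarrow> 'a poly poly" where
  "hp_yp h = monom (h ^ CHAR('a)) CHAR('a)"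

lemma hp_yp_eq: "wmult (W (h ^ CHAR('a))) (wpow WY CHAR('a)) = hp_yp (h :: 'a::field poly)"
  by (simp add: hp_yp_def wmult_W wpow_WY smult_monom)

lemma hp_yp_char_sparse: "char_sparse (hp_yp h)"
  by (simp add: char_sparse_def hp_yp_def coeff_monom)

lemma wpow_hp_yp: "wpow (hp_yp h) m = monom (h ^ (CHAR('a) * m)) (CHAR('a) * m)"
  for h :: "'a::field poly"
proof (induct m)
  case (Suc m)
  have "wpow (hp_yp h) (Suc m) = hp_yp h * wpow (hp_yp h) m"
    by (simp add: wmult_char_sparse[OF hp_yp_char_sparse])
  then show ?case using Suc by (simp add: hp_yp_def mult_monom power_add)
qed simp

lemma gen_alg_hp_yp_subset_Cx: "gen_alg {WX, hp_yp h} \<subseteq> Cx h"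
proof
  fix P assume "P \<in> gen_alg {WX, hp_yp h}"
  have "hp_yp h \<in> Cx h" unfolding Cx_eq using hp_yp_char_sparse by (simp add: hp_yp_def hdiv_monom)
  moreover have "WX \<in> Cx h" "1 \<in> Cx h" unfolding Cx_def Ah_def by (auto intro: gen_alg.intros)
  ultimately have gens: "hp_yp h \<in> Cx h" "WX \<in> Cx h" "1 \<in> Cx h" by auto
  have scal: "W [:c:] * a \<in> Cx h" if "a \<in> Cx h" for a c
    using that unfolding Cx_eq char_sparse_def by (simp add: W_def hdiv_smult)
  from \<open>P \<in> gen_alg {WX, hp_yp h}\<close> show "P \<in> Cx h"
    by induct (use gens scal in \<open>auto simp: Cx_add Cx_wmult\<close>)
qed

text \<open>Conversely C(x) is spanned over F[x] by the monomials h^(pm) y^(pm) = (h^p y^p)^m.\<close>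
lemma Cx_subset_gen_alg_hp_yp: "Cx h \<subseteq> gen_alg {WX, hp_yp h}"
proof
  fix P assume P: "P \<in> Cx h"
  have "monom (coeff P i) i \<in> gen_alg {WX, hp_yp h}" for i
  proof (cases "CHAR('a) dvd i")
    case True
    then obtain m where i: "i = CHAR('a) * m" by blast
    obtain a where a: "coeff P i = h ^ i * a" using P unfolding Cx_eq hdiv_def by blast
    have "monom (coeff P i) i = smult a (wpow (hp_yp h) m)"
      unfolding a wpow_hp_yp i[symmetric] by (simp add: smult_monom mult.commute)
    moreover have "smult a (wpow (hp_yp h) m) \<in> gen_alg {WX, hp_yp h}"
      by (intro gen_alg_smult gen_alg_wpow) auto
    ultimately show ?thesis by simp
  next
    case False
    then show ?thesis using P gen_alg_0 unfolding Cx_eq char_sparse_def by auto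
  qed
  then have "(\<Sum>i\<le>degree P. monom (coeff P i) i) \<in> gen_alg {WX, hp_yp h}" by (intro gen_alg_sum)
  then show "P \<in> gen_alg {WX, hp_yp h}" by (simp add: poly_as_sum_of_monoms)
qed

theorem Cx_gen_alg:
  fixes h :: "'a::field poly"
  shows "Cx h = gen_alg {WX, wmult (W (h ^ CHAR('a))) (wpow WY CHAR('a))}"
  unfolding hp_yp_eq using gen_alg_hp_yp_subset_Cx Cx_subset_gen_alg_hp_yp by blast

section \<open>Criteria for direct sums\<close>

lemma dsumI:
  fixes M :: "'b::ab_group_add set"
  assumes sums_in: "\<And>n v. (\<forall>i<n. v i \<in> V i) \<Longrightarrow> (\<Sum>i<n. v i) \<in> M"
    and decomp: "\<And>m. m \<in> M \<Longrightarrow> \<exists>n. (\<forall>i<n. \<pi> i m \<in> V i) \<and> m = (\<Sum>i<n. \<pi> i m)"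
    and proj_add: "\<And>i a b. \<pi> i (a + b) = \<pi> i a + \<pi> i b"
    and proj_same: "\<And>i v. v \<in> V i \<Longrightarrow> \<pi> i v = v"
    and proj_other: "\<And>i j v. v \<in> V j \<Longrightarrow> i \<noteq> j \<Longrightarrow> \<pi> i v = 0"
  shows "is_dsum M V"
proof -
  have proj_0: "\<pi> i 0 = 0" for i using proj_add[of i 0 0] by simp
  have proj_sum: "\<pi> j (\<Sum>i<n. v i) = (\<Sum>i<n. \<pi> j (v i))" for j n v
    using sum_comp_morphism[of "\<pi> j" v "{..<n}"] by (simp add: proj_0 proj_add o_def)
  have "M = sum_family V"
  proof
    show "M \<subseteq> sum_family V"
    proof
      fix m assume "m \<in> M"
      then obtain n where "\<forall>i<n. \<pi> i m \<in> V i" "m = (\<Sum>i<n. \<pi> i m)" using decomp by blast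
      then show "m \<in> sum_family V" unfolding sum_family_def
        by (intro CollectI exI[of _ n] exI[of _ "\<lambda>i. \<pi> i m"]) simp
    qed
    show "sum_family V \<subseteq> M" unfolding sum_family_def using sums_in by auto
  qed
  moreover have "indep_family V"
    unfolding indep_family_def
  proof (intro allI impI)
    fix n v j assume v: "\<forall>i<n. v i \<in> V i" and s: "(\<Sum>i<n. v i) = 0" and j: "j < n"
    have "\<pi> j (\<Sum>i<n. v i) = (\<Sum>i<n. if i = j then v j else 0)"
      unfolding proj_sum using v proj_same proj_other by (intro sum.cong) auto
    then show "v j = 0" using s j proj_0 by simp
  qed
  ultimately show ?thesis unfolding is_dsum_def by simp
qed

lemma sum_family_image:
  fixes \<Phi> :: "'b::ab_group_add \<Rightarrow> 'c::ab_group_add"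
  assumes add: "\<And>a b. \<Phi> (a + b) = \<Phi> a + \<Phi> b"
  shows "\<Phi> ` sum_family V = sum_family (\<lambda>i. \<Phi> ` V i)"
proof
  have \<Phi>_0: "\<Phi> 0 = 0" using add[of 0 0] by simp
  have \<Phi>_sum: "\<Phi> (\<Sum>i<n. w i) = (\<Sum>i<n. \<Phi> (w i))" for n w
    using sum_comp_morphism[of \<Phi> w "{..<n}"] by (simp add: \<Phi>_0 add o_def)
  show "\<Phi> ` sum_family V \<subseteq> sum_family (\<lambda>i. \<Phi> ` V i)"
  proof
    fix x assume "x \<in> \<Phi> ` sum_family V"
    then obtain n w where w: "\<forall>i<n. w i \<in> V i" "x = \<Phi> (\<Sum>i<n. w i)"
      unfolding sum_family_def by blast
    then show "x \<in> sum_family (\<lambda>i. \<Phi> ` V i)" unfolding sum_family_def \<Phi>_sum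
      by (intro CollectI exI[of _ n] exI[of _ "\<lambda>i. \<Phi> (w i)"]) auto
  qed
  show "sum_family (\<lambda>i. \<Phi> ` V i) \<subseteq> \<Phi> ` sum_family V"
  proof
    fix x assume "x \<in> sum_family (\<lambda>i. \<Phi> ` V i)"
    then obtain n v where v: "\<forall>i<n. v i \<in> \<Phi> ` V i" "x = (\<Sum>i<n. v i)"
      unfolding sum_family_def by blast
    then have "\<forall>i\<in>{..<n}. \<exists>w. w \<in> V i \<and> v i = \<Phi> w" by blast
    then obtain w where w: "\<forall>i\<in>{..<n}. w i \<in> V i \<and> v i = \<Phi> (w i)" by metis
    have "x = \<Phi> (\<Sum>i<n. w i)" unfolding \<Phi>_sum v(2) using w by (intro sum.cong) auto
    moreover have "(\<Sum>i<n. w i) \<in> sum_family V" unfolding sum_family_def using w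
      by (intro CollectI exI[of _ n] exI[of _ w]) auto
    ultimately show "x \<in> \<Phi> ` sum_family V" by blast
  qed
qed

lemma dsum_transport:
  fixes \<Phi> :: "'b::ab_group_add \<Rightarrow> 'c::ab_group_add"
  assumes add: "\<And>a b. \<Phi> (a + b) = \<Phi> a + \<Phi> b" and inj: "\<And>a. \<Phi> a = 0 \<Longrightarrow> a = 0"
    and ds: "is_dsum M V"
  shows "is_dsum (\<Phi> ` M) (\<lambda>i. \<Phi> ` V i)"
proof -
  have M: "M = sum_family V" and indep: "indep_family V" using ds unfolding is_dsum_def by auto
  have "\<Phi> ` M \<subseteq> sum_family (\<lambda>i. \<Phi> ` V i)" "sum_family (\<lambda>i. \<Phi> ` V i) \<subseteq> \<Phi> ` M"
    using sum_family_image[OF add] M by auto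
  moreover have "indep_family (\<lambda>i. \<Phi> ` V i)"
    unfolding indep_family_def
  proof (intro allI impI)
    fix n v j assume v: "\<forall>i<n. v i \<in> \<Phi> ` V i" and s: "(\<Sum>i<n. v i) = 0" and j: "j < n"
    have \<Phi>_0: "\<Phi> 0 = 0" using add[of 0 0] by simp
    have "\<forall>i\<in>{..<n}. \<exists>w. w \<in> V i \<and> v i = \<Phi> w" using v by blast
    then obtain w where w: "\<forall>i\<in>{..<n}. w i \<in> V i \<and> v i = \<Phi> (w i)" by metis
    have "\<Phi> (\<Sum>i<n. w i) = (\<Sum>i<n. v i)"
      using sum_comp_morphism[of \<Phi> w "{..<n}"] w by (simp add: \<Phi>_0 add o_def)
    then have "(\<Sum>i<n. w i) = 0" using s inj by simp
    then have "w j = 0" using indep w j unfolding indep_family_def by blast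
    then show "v j = 0" using w j \<Phi>_0 by simp
  qed
  ultimately show ?thesis unfolding is_dsum_def by blast
qed

lemma closed_sum:
  assumes "0 \<in> M" "\<And>a b. a \<in> M \<Longrightarrow> b \<in> M \<Longrightarrow> a + b \<in> M" "\<forall>i<(n::nat). v i \<in> M"
  shows "(\<Sum>i<n. v i) \<in> M"
  using assms(3) by (induct n) (auto intro: assms(1,2))

definition poly_upto :: "(nat \<Rightarrow> 'b::comm_monoid_add) \<Rightarrow> nat \<Rightarrow> 'b poly" where
  "poly_upto f N = (\<Sum>n\<le>N. monom (f n) n)"

lemma coeff_poly_upto: "coeff (poly_upto f N) k = (if k \<le> N then f k else 0)"
  by (simp add: poly_upto_def coeff_sum coeff_monom)

definition coeff_restrict :: "(nat \<Rightarrow> bool) \<Rightarrow> 'b::comm_monoid_add poly \<Rightarrow> 'b poly" where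
  "coeff_restrict A X = poly_upto (\<lambda>n. if A n then coeff X n else 0) (degree X)"

lemma coeff_coeff_restrict: "coeff (coeff_restrict A X) k = (if A k then coeff X k else 0)"
  by (auto simp: coeff_restrict_def coeff_poly_upto coeff_eq_0)

lemma sum_coeff_restrict_classes:
  fixes m :: "'b::comm_monoid_add poly" and cls :: "nat \<Rightarrow> nat"
  shows "m = (\<Sum>i<Suc (Max (cls ` {..degree m})). coeff_restrict (\<lambda>k. cls k = i) m)"
    (is "_ = (\<Sum>i<?n. _)")
proof (rule poly_eqI)
  fix k
  have "(\<Sum>i<?n. coeff (coeff_restrict (\<lambda>k. cls k = i) m) k)
      = (\<Sum>i<?n. if i = cls k then coeff m k else 0)"
    by (intro sum.cong) (auto simp: coeff_coeff_restrict)
  also have "\<dots> = coeff m k"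
  proof (cases "k \<le> degree m")
    case True
    then have "cls k < ?n" by (simp add: le_imp_less_Suc)
    then show ?thesis by simp
  next
    case False
    then show ?thesis by (simp add: coeff_eq_0)
  qed
  finally show "coeff m k = coeff (\<Sum>i<?n. coeff_restrict (\<lambda>k. cls k = i) m) k"
    by (simp add: coeff_sum)
qed

lemma dsum_by_degree_class:
  fixes M :: "'b::ab_group_add poly set" and cls :: "nat \<Rightarrow> nat"
  assumes support: "\<And>i v k. v \<in> V i \<Longrightarrow> coeff v k \<noteq> 0 \<Longrightarrow> cls k = i"
    and V_sub: "\<And>i. V i \<subseteq> M"
    and M_0: "0 \<in> M" and M_add: "\<And>a b. a \<in> M \<Longrightarrow> b \<in> M \<Longrightarrow> a + b \<in> M"
    and proj: "\<And>m i. m \<in> M \<Longrightarrow> coeff_restrict (\<lambda>k. cls k = i) m \<in> V i"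
  shows "is_dsum M V"
proof (rule dsumI[where \<pi> = "\<lambda>i. coeff_restrict (\<lambda>k. cls k = i)"])
  show "(\<Sum>i<n. v i) \<in> M" if "\<forall>i<n. v i \<in> V i" for n v
    using that V_sub by (intro closed_sum M_0 M_add) auto
  show "\<exists>n. (\<forall>i<n. coeff_restrict (\<lambda>k. cls k = i) m \<in> V i)
      \<and> m = (\<Sum>i<n. coeff_restrict (\<lambda>k. cls k = i) m)" if m: "m \<in> M" for m
    using sum_coeff_restrict_classes[of m cls] m proj by blast
  show "coeff_restrict (\<lambda>k. cls k = i) (a + b)
      = coeff_restrict (\<lambda>k. cls k = i) a + coeff_restrict (\<lambda>k. cls k = i) b" for i a b
    by (rule poly_eqI) (simp add: coeff_coeff_restrict)
  show "coeff_restrict (\<lambda>k. cls k = i) v = v" if "v \<in> V i" for i v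
    using support[OF that] by (intro poly_eqI) (auto simp: coeff_coeff_restrict)
  show "coeff_restrict (\<lambda>k. cls k = i) v = 0" if "v \<in> V j" "i \<noteq> j" for i j v
    using support[OF that(1)] that(2) by (intro poly_eqI) (auto simp: coeff_coeff_restrict)
qed

section \<open>Part (ii)(a),(b): decompositions of C(x) and of [x, A_h]\<close>

theorem Cx_dsum:
  fixes h :: "'a::field poly"
  shows "is_dsum (Cx h)
    (\<lambda>i. if CHAR('a) dvd i then {wmult (W f) (wmult (W (h ^ i)) (wpow WY i)) | f. True} else {0})"
  unfolding wmult_W wpow_WY smult_monom mult_1_right
proof (rule dsum_by_degree_class[where cls = id])
  fix i v k assume "v \<in> (if CHAR('a) dvd i then {monom (f * h ^ i) i |f. True} else {0})"
    "coeff v k \<noteq> 0"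
  then show "id k = i" by (auto simp: coeff_monom split: if_splits)
next
  fix i
  have "monom (f * h ^ i) i \<in> Cx h" if "CHAR('a) dvd i" for f
    using that unfolding Cx_eq char_sparse_def by (auto simp: hdiv_monom coeff_monom)
  then show "(if CHAR('a) dvd i then {monom (f * h ^ i) i |f. True} else {0}) \<subseteq> Cx h"
    using Cx_0 by auto
next
  fix m i assume m: "m \<in> Cx h"
  have part: "coeff_restrict (\<lambda>k. id k = i) m = monom (coeff m i) i"
    by (rule poly_eqI) (simp add: coeff_coeff_restrict coeff_monom)
  obtain a where "coeff m i = h ^ i * a" using m unfolding Cx_eq hdiv_def by blast
  then show "coeff_restrict (\<lambda>k. id k = i) m
      \<in> (if CHAR('a) dvd i then {monom (f * h ^ i) i |f. True} else {0})"
    using m unfolding part Cx_eq char_sparse_def by (auto simp: mult.commute)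
qed (auto simp: Cx_0 Cx_add)

text \<open>The normal forms of the elements of [x, A_h]: Q_n divisible by h^(n+1), and Q_n = 0 when
  p divides n + 1 (the coefficient (n+1) P_(n+1) of [P, x] vanishes there).\<close>
definition xcomm_nf :: "'a::field poly \<Rightarrow> 'a poly poly set" where
  "xcomm_nf h = {Q. \<forall>n. h ^ Suc n dvd coeff Q n \<and> (CHAR('a) dvd Suc n \<longrightarrow> coeff Q n = 0)}"

lemma xcomm_nf_0: "0 \<in> xcomm_nf h"
  by (simp add: xcomm_nf_def)

lemma xcomm_nf_add: "a \<in> xcomm_nf h \<Longrightarrow> b \<in> xcomm_nf h \<Longrightarrow> a + b \<in> xcomm_nf h"
  by (simp add: xcomm_nf_def)

lemma coeff_comm_WX_left:
  "coeff (wmult WX a - wmult a WX) n = - smult (of_nat (Suc n)) (coeff a (Suc n))"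
  using coeff_comm_WX[of a n] by (metis coeff_minus minus_diff_eq)

text \<open>Coefficients of [x, a] are -(n+1) a_(n+1): divisible by h^(n+1), zero when p | n + 1.\<close>
lemma commset_WX_subset: "commset h WX \<subseteq> xcomm_nf h"
proof
  fix Q assume "Q \<in> commset h WX"
  then obtain a where a: "a \<in> hdiv h" "Q = wmult WX a - wmult a WX"
    unfolding commset_def Ah_eq_hdiv by blast
  show "Q \<in> xcomm_nf h" unfolding xcomm_nf_def
  proof (intro CollectI allI conjI impI)
    fix n
    have "h ^ Suc n dvd coeff a (Suc n)" using a(1) unfolding hdiv_def by blast
    then show "h ^ Suc n dvd coeff Q n" unfolding a(2) coeff_comm_WX_left by (simp add: dvd_smult)
    assume "CHAR('a) dvd Suc n"
    then have "of_nat (Suc n) = (0::'a)" by (simp only: of_nat_eq_0_iff_char_dvd)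
    then show "coeff Q n = 0" unfolding a(2) coeff_comm_WX_left by simp
  qed
qed

text \<open>Q = [x, a] is solved coefficientwise by a_(n+1) = -Q_n / (n+1) wherever n + 1 is invertible.\<close>
lemma xcomm_nf_subset: "xcomm_nf h \<subseteq> commset h WX"
proof
  fix Q assume Q: "Q \<in> xcomm_nf h"
  define a where "a = pCons 0
    (poly_upto (\<lambda>n. smult (- inverse (of_nat (Suc n))) (coeff Q n)) (degree Q))"
  have coeff_a: "coeff a (Suc n) = smult (- inverse (of_nat (Suc n))) (coeff Q n)" for n
    by (auto simp: a_def coeff_poly_upto coeff_eq_0)
  have "a \<in> hdiv h" unfolding hdiv_def
  proof (intro CollectI allI)
    fix i show "h ^ i dvd coeff a i"
    proof (cases i)
      case 0
      then show ?thesis by (simp add: a_def)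
    next
      case (Suc n)
      have "h ^ Suc n dvd coeff Q n" using Q unfolding xcomm_nf_def by blast
      then show ?thesis unfolding Suc coeff_a by (rule dvd_smult)
    qed
  qed
  moreover have "Q = wmult WX a - wmult a WX"
  proof (rule poly_eqI)
    fix n
    show "coeff Q n = coeff (wmult WX a - wmult a WX) n"
    proof (cases "of_nat (Suc n) = (0::'a)")
      case True
      then have "coeff Q n = 0" using Q unfolding xcomm_nf_def of_nat_eq_0_iff_char_dvd by blast
      then show ?thesis unfolding coeff_comm_WX_left coeff_a using True by simp
    next
      case False
      then show ?thesis unfolding coeff_comm_WX_left coeff_a by simp
    qed
  qed
  ultimately show "Q \<in> commset h WX" unfolding commset_def Ah_eq_hdiv by blast
qed

theorem commset_WX_eq: "commset h WX = xcomm_nf h"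
  using commset_WX_subset xcomm_nf_subset by blast

theorem commset_WX_dsum_monomials:
  fixes h :: "'a::field poly"
  shows "is_dsum (commset h WX)
           (\<lambda>i. if (i + 1) mod CHAR('a) \<noteq> 0
                then {wmult (W h) (wmult (W f) (wmult (W (h ^ i)) (wpow WY i))) | f. True} else {0})"
  unfolding commset_WX_eq wmult_W wpow_WY smult_monom mult_1_right
proof (rule dsum_by_degree_class[where cls = id])
  fix i v k assume "v \<in> (if (i + 1) mod CHAR('a) \<noteq> 0 then {monom (h * (f * h ^ i)) i |f. True} else {0})"
    "coeff v k \<noteq> 0"
  then show "id k = i" by (auto simp: coeff_monom split: if_splits)
next
  fix i
  have "monom (h * (f * h ^ i)) i \<in> xcomm_nf h" if "(i + 1) mod CHAR('a) \<noteq> 0" for f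
    using that unfolding xcomm_nf_def by (auto simp: coeff_monom mod_eq_0_iff_dvd)
  then show "(if (i + 1) mod CHAR('a) \<noteq> 0 then {monom (h * (f * h ^ i)) i |f. True} else {0})
      \<subseteq> xcomm_nf h"
    using xcomm_nf_0 by auto
next
  fix m i assume m: "m \<in> xcomm_nf h"
  have part: "coeff_restrict (\<lambda>k. id k = i) m = monom (coeff m i) i"
    by (rule poly_eqI) (simp add: coeff_coeff_restrict coeff_monom)
  obtain a where "coeff m i = h ^ Suc i * a" using m unfolding xcomm_nf_def by blast
  then show "coeff_restrict (\<lambda>k. id k = i) m
      \<in> (if (i + 1) mod CHAR('a) \<noteq> 0 then {monom (h * (f * h ^ i)) i |f. True} else {0})"
    using m unfolding part xcomm_nf_def by (auto simp: algebra_simps mod_eq_0_iff_dvd)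
qed (auto simp: xcomm_nf_0 xcomm_nf_add)

text \<open>For the second decomposition of [x, A_h] we split normal forms by the residue of the
  y-degree modulo p: the part in degrees congruent to i is h^(i+1) y^i times an element of C(x).\<close>

lemma mod_eq_iff_dvd_diff:
  fixes p :: nat
  assumes "i < p" "i \<le> n"
  shows "n mod p = i \<longleftrightarrow> p dvd (n - i)"
  using mod_eq_dvd_iff_nat[OF assms(2), of p] assms(1) by simp

lemma coeff_Cx_shift_support:
  assumes c: "c \<in> Cx h" and i: "i < CHAR('a)"
    and nz: "coeff (monom (g :: 'a::field poly) i * c) n \<noteq> 0"
  shows "n mod CHAR('a) = i"
proof -
  have "i \<le> n" "coeff c (n - i) \<noteq> 0" using nz by (auto simp: coeff_monom_mult split: if_splits)
  moreover from this have "CHAR('a) dvd (n - i)" using c unfolding Cx_eq char_sparse_def by blast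
  ultimately show ?thesis using mod_eq_iff_dvd_diff[OF i] by simp
qed

lemma Cx_shift_in_xcomm_nf:
  fixes h :: "'a::field poly"
  assumes c: "c \<in> Cx h" and i: "Suc i < CHAR('a)"
  shows "monom (h ^ Suc i) i * c \<in> xcomm_nf h"
  unfolding xcomm_nf_def
proof (intro CollectI allI conjI impI)
  fix n
  show "h ^ Suc n dvd coeff (monom (h ^ Suc i) i * c) n"
  proof (cases "n < i")
    case True
    then show ?thesis by (simp add: coeff_monom_mult)
  next
    case False
    have eq: "coeff (monom (h ^ Suc i) i * c) n = h ^ Suc i * coeff c (n - i)"
      using False by (simp add: coeff_monom_mult)
    have pow: "h ^ Suc n = h ^ Suc i * h ^ (n - i)" using False by (simp flip: power_add)
    have "h ^ (n - i) dvd coeff c (n - i)" using c unfolding Cx_eq hdiv_def by blast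
    then show ?thesis unfolding eq pow by (rule mult_dvd_mono[OF dvd_refl])
  qed
next
  fix n assume p_dvd: "CHAR('a) dvd Suc n"
  show "coeff (monom (h ^ Suc i) i * c) n = 0"
  proof (rule ccontr)
    assume "coeff (monom (h ^ Suc i) i * c) n \<noteq> 0"
    then have "n mod CHAR('a) = i" using i by (intro coeff_Cx_shift_support[OF c]) auto
    then have "Suc n mod CHAR('a) = Suc i" using i by (metis mod_Suc_eq mod_less)
    then show False using p_dvd i by simp
  qed
qed

text \<open>Conversely the residue-i part of an element of [x, A_h] has this form for i + 1 < p:
  divide its coefficients by h^(i+1) and shift down by i.\<close>
lemma xcomm_nf_residue_part:
  fixes h :: "'a::field poly"
  assumes h: "h \<noteq> 0" and m: "m \<in> xcomm_nf h" and i: "Suc i < CHAR('a)"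
  shows "\<exists>c\<in>Cx h. coeff_restrict (\<lambda>k. k mod CHAR('a) = i) m = monom (h ^ Suc i) i * c"
proof
  let ?p = "CHAR('a)"
  have m_dvd: "h ^ Suc n dvd coeff m n" for n using m unfolding xcomm_nf_def by blast
  define c where "c = poly_upto (\<lambda>k. if ?p dvd k then coeff m (k + i) div h ^ Suc i else 0) (degree m)"
  have coeff_c: "coeff c k = (if k \<le> degree m \<and> ?p dvd k then coeff m (k + i) div h ^ Suc i else 0)"
    for k by (simp add: c_def coeff_poly_upto)
  show "c \<in> Cx h" unfolding Cx_eq char_sparse_def hdiv_def
  proof (intro CollectI conjI allI impI)
    fix k
    have "h ^ (Suc i + k) dvd coeff m (k + i)" using m_dvd[of "k + i"] by (simp add: add.commute)
    then obtain y where y: "coeff m (k + i) = h ^ (Suc i + k) * y" by (elim dvdE)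
    have "coeff m (k + i) div h ^ Suc i = h ^ k * y"
      using h unfolding y power_add mult.assoc by simp
    then have "h ^ k dvd coeff m (k + i) div h ^ Suc i" by simp
    then show "h ^ k dvd coeff c k" unfolding coeff_c by simp
  next
    fix k assume "\<not> ?p dvd k" then show "coeff c k = 0" unfolding coeff_c by simp
  qed
  show "coeff_restrict (\<lambda>k. k mod ?p = i) m = monom (h ^ Suc i) i * c"
  proof (rule poly_eqI)
    fix n
    show "coeff (coeff_restrict (\<lambda>k. k mod ?p = i) m) n = coeff (monom (h ^ Suc i) i * c) n"
    proof (cases "n < i")
      case True
      then show ?thesis using i by (simp add: coeff_monom_mult coeff_coeff_restrict)
    next
      case False
      have shift: "?p dvd (n - i) \<longleftrightarrow> n mod ?p = i" using mod_eq_iff_dvd_diff i False by simp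
      have "h ^ Suc i dvd coeff m n"
        using False m_dvd[of n] le_imp_power_dvd[of "Suc i" "Suc n" h] by (auto intro: dvd_trans)
      then have "h ^ Suc i * (coeff m n div h ^ Suc i) = coeff m n" by simp
      then show ?thesis using False shift
        by (auto simp: coeff_monom_mult coeff_coeff_restrict coeff_c coeff_eq_0)
    qed
  qed
qed

lemma xcomm_nf_residue_part_top:
  fixes h :: "'a::field poly"
  assumes m: "m \<in> xcomm_nf h" and p: "CHAR('a) > 0" and i: "\<not> Suc i < CHAR('a)"
  shows "coeff_restrict (\<lambda>k. k mod CHAR('a) = i) m = 0"
proof (rule poly_eqI)
  fix n
  have "coeff m n = 0" if "n mod CHAR('a) = i"
  proof -
    have "Suc (n mod CHAR('a)) = CHAR('a)" using that i p by (metis Suc_lessI mod_less_divisor)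
    then have "CHAR('a) dvd Suc n" by (metis mod_Suc dvd_eq_mod_eq_0 mod_self n_not_Suc_n)
    then show ?thesis using m unfolding xcomm_nf_def by blast
  qed
  then show "coeff (coeff_restrict (\<lambda>k. k mod CHAR('a) = i) m) n = coeff 0 n"
    by (simp add: coeff_coeff_restrict)
qed

definition Cx_block :: "'a::field poly \<Rightarrow> nat \<Rightarrow> 'a poly poly set" where
  "Cx_block h i = (if Suc i < CHAR('a) then {monom (h ^ Suc i) i * c | c. c \<in> Cx h} else {0})"

lemma xcomm_nf_dsum_Cx_block:
  fixes h :: "'a::field poly"
  assumes h: "h \<noteq> 0" and p: "CHAR('a) > 0"
  shows "is_dsum (xcomm_nf h) (Cx_block h)"
proof (rule dsum_by_degree_class[where cls = "\<lambda>k. k mod CHAR('a)"])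
  show "k mod CHAR('a) = i" if "v \<in> Cx_block h i" "coeff v k \<noteq> 0" for i v k
    using that coeff_Cx_shift_support[of _ h i] by (auto simp: Cx_block_def split: if_splits)
  show "Cx_block h i \<subseteq> xcomm_nf h" for i
    using Cx_shift_in_xcomm_nf xcomm_nf_0 by (auto simp: Cx_block_def)
  show "coeff_restrict (\<lambda>k. k mod CHAR('a) = i) m \<in> Cx_block h i" if "m \<in> xcomm_nf h" for m i
    using xcomm_nf_residue_part[OF h that] xcomm_nf_residue_part_top[OF that p]
    by (cases "Suc i < CHAR('a)") (auto simp: Cx_block_def)
qed (auto simp: xcomm_nf_0 xcomm_nf_add)

text \<open>Elements of C(x) multiply y^i from the left as polynomials, so h c h^i y^i = h^(i+1) y^i c.\<close>
lemma wmult_h_Cx_monom: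
  assumes "c \<in> Cx h"
  shows "wmult (W h) (wmult c (wmult (W (h ^ i)) (wpow WY i))) = monom (h ^ Suc i) i * c"
proof -
  have "wmult c (monom (h ^ i) i) = c * monom (h ^ i) i"
    using assms unfolding Cx_eq by (simp add: wmult_char_sparse)
  then show ?thesis
    by (simp add: wmult_W wpow_WY smult_monom mult.commute[of c] flip: mult_smult_left)
qed

theorem commset_WX_dsum_Cx:
  fixes h :: "'a::field poly"
  assumes h: "h \<noteq> 0" and p: "CHAR('a) > 0"
  shows "is_dsum (commset h WX)
           (\<lambda>i. if i \<le> CHAR('a) - 2
                then {wmult (W h) (wmult c (wmult (W (h ^ i)) (wpow WY i))) | c. c \<in> Cx h} else {0})"
proof -
  have small: "i \<le> CHAR('a) - 2 \<longleftrightarrow> Suc i < CHAR('a)" for i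
    using p CHAR_not_1[where 'a='a] by linarith
  have blocks: "{wmult (W h) (wmult c (wmult (W (h ^ i)) (wpow WY i))) | c. c \<in> Cx h}
      = {monom (h ^ Suc i) i * c | c. c \<in> Cx h}" for i
    unfolding Setcompr_eq_image using wmult_h_Cx_monom by (rule image_cong[OF refl])
  have "(\<lambda>i. if i \<le> CHAR('a) - 2
      then {wmult (W h) (wmult c (wmult (W (h ^ i)) (wpow WY i))) | c. c \<in> Cx h} else {0})
      = Cx_block h"
    by (intro ext) (simp only: Cx_block_def small blocks)
  then show ?thesis using xcomm_nf_dsum_Cx_block[OF h p] by (simp add: commset_WX_eq)
qed

section \<open>Part (ii)(c): the decompositions of [y-hat, A_h]\<close>

lemma wmult_yhat_smult:
  "wmult (yhat h) (smult f X) = smult f (wmult (yhat h) X) + smult (h * pderiv f) X"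
  by (simp add: wmult_yhat ymul_smult smult_add_right algebra_simps)

lemma comm_yhat_yhat_eval:
  "wmult (yhat h) (yhat_eval h F) - wmult (yhat_eval h F) (yhat h)
     = yhat_eval h (map_poly (\<lambda>f. h * pderiv f) F)"
proof -
  let ?n = "Suc (degree F)"
  have "degree (map_poly (\<lambda>f. h * pderiv f) F) \<le> degree F"
    by (rule degree_le) (auto simp: coeff_map_poly coeff_eq_0)
  then have dg: "degree (map_poly (\<lambda>f. h * pderiv f) F) < ?n" by simp
  have F: "yhat_eval h F = (\<Sum>i<?n. smult (coeff F i) (wpow (yhat h) i))"
    by (rule yhat_eval_bound) simp
  have "wmult (yhat h) (yhat_eval h F) - wmult (yhat_eval h F) (yhat h)
      = (\<Sum>i<?n. wmult (yhat h) (smult (coeff F i) (wpow (yhat h) i))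
                - wmult (smult (coeff F i) (wpow (yhat h) i)) (yhat h))"
    unfolding F wmult_sum_right wmult_sum_left sum_subtractf ..
  also have "\<dots> = (\<Sum>i<?n. smult (h * pderiv (coeff F i)) (wpow (yhat h) i))"
    by (intro sum.cong refl) (simp add: wmult_yhat_smult wmult_smult_left wpow_Suc_right)
  also have "\<dots> = yhat_eval h (map_poly (\<lambda>f. h * pderiv f) F)"
    using dg by (simp add: yhat_eval_bound[of _ ?n] coeff_map_poly)
  finally show ?thesis .
qed

text \<open>The y-hat coordinates of [y-hat, A_h]: every coefficient lies in h im(d/dx).\<close>
definition ycomm_coeffs :: "'a::field poly \<Rightarrow> 'a poly poly set" where
  "ycomm_coeffs h = {F. \<forall>i. \<exists>f. coeff F i = pderiv f * h}"

lemma ycomm_coeffs_0: "0 \<in> ycomm_coeffs h"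
  unfolding ycomm_coeffs_def by (auto intro: exI[of _ 0])

lemma ycomm_coeffs_add: "a \<in> ycomm_coeffs h \<Longrightarrow> b \<in> ycomm_coeffs h \<Longrightarrow> a + b \<in> ycomm_coeffs h"
proof -
  assume a: "a \<in> ycomm_coeffs h" and b: "b \<in> ycomm_coeffs h"
  have "\<exists>f. coeff (a + b) i = pderiv f * h" for i
  proof -
    obtain f g where "coeff a i = pderiv f * h" "coeff b i = pderiv g * h"
      using a b unfolding ycomm_coeffs_def by blast
    then have "coeff (a + b) i = pderiv (f + g) * h" by (simp add: pderiv_add distrib_right)
    then show ?thesis by blast
  qed
  then show ?thesis unfolding ycomm_coeffs_def by blast
qed

lemma ycomm_coeffs_eq_range: "ycomm_coeffs h = range (map_poly (\<lambda>f. h * pderiv f))"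
proof safe
  fix G assume G: "G \<in> ycomm_coeffs h"
  define fs where "fs i = (SOME f. coeff G i = pderiv f * h)" for i
  have fs: "coeff G i = pderiv (fs i) * h" for i
  proof -
    have "\<exists>f. coeff G i = pderiv f * h" using G unfolding ycomm_coeffs_def by blast
    then show ?thesis unfolding fs_def by (rule someI_ex)
  qed
  have "G = map_poly (\<lambda>f. h * pderiv f) (poly_upto fs (degree G))"
  proof (rule poly_eqI)
    fix i
    show "coeff G i = coeff (map_poly (\<lambda>f. h * pderiv f) (poly_upto fs (degree G))) i"
    proof (cases "i \<le> degree G")
      case True
      then show ?thesis by (simp add: coeff_map_poly coeff_poly_upto fs mult.commute)
    next
      case False
      then show ?thesis by (simp add: coeff_map_poly coeff_poly_upto coeff_eq_0)
    qed
  qed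
  then show "G \<in> range (map_poly (\<lambda>f. h * pderiv f))" by blast
qed (auto simp: ycomm_coeffs_def coeff_map_poly mult.commute)

theorem commset_yhat_eq: "commset h (yhat h) = yhat_eval h ` ycomm_coeffs h"
proof -
  have "commset h (yhat h) = (\<lambda>F. yhat_eval h (map_poly (\<lambda>f. h * pderiv f) F)) ` UNIV"
    unfolding commset_def
  proof safe
    fix a assume "a \<in> Ah h"
    then obtain F where "a = yhat_eval h F" using Ah_yhat_eval by blast
    then have "wmult (yhat h) a - wmult a (yhat h) = yhat_eval h (map_poly (\<lambda>f. h * pderiv f) F)"
      by (simp add: comm_yhat_yhat_eval)
    then show "wmult (yhat h) a - wmult a (yhat h)
        \<in> range (\<lambda>F. yhat_eval h (map_poly (\<lambda>f. h * pderiv f) F))"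
      by blast
  next
    fix F
    show "\<exists>a. yhat_eval h (map_poly (\<lambda>f. h * pderiv f) F) = wmult (yhat h) a - wmult a (yhat h)
        \<and> a \<in> Ah h"
      using comm_yhat_yhat_eval[of h F] yhat_eval_in_Ah[of h F] by metis
  qed
  then show ?thesis unfolding ycomm_coeffs_eq_range by (simp add: image_image)
qed

theorem commset_yhat_dsum_monomials:
  fixes h :: "'a::field poly"
  assumes h: "h \<noteq> 0"
  shows "is_dsum (commset h (yhat h)) (\<lambda>i. {wmult (W (pderiv f * h)) (wpow (yhat h) i) | f. True})"
proof -
  define V where "V i = {monom (pderiv f * h) i | f. True}" for i
  have family: "(\<lambda>i. {wmult (W (pderiv f * h)) (wpow (yhat h) i) | f. True}) = (\<lambda>i. yhat_eval h ` V i)"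
    by (simp add: V_def full_SetCompr_eq image_image wmult_W yhat_eval_monom)
  have "is_dsum (ycomm_coeffs h) V"
  proof (rule dsum_by_degree_class[where cls = id])
    show "id k = i" if "v \<in> V i" "coeff v k \<noteq> 0" for i v k
      using that by (auto simp: V_def coeff_monom split: if_splits)
    show "V i \<subseteq> ycomm_coeffs h" for i
    proof
      fix v assume "v \<in> V i"
      then obtain f where v: "v = monom (pderiv f * h) i" by (auto simp: V_def)
      have "\<exists>g. coeff v k = pderiv g * h" for k
      proof (cases "k = i")
        case True
        then show ?thesis by (intro exI[of _ f]) (simp add: v)
      next
        case False
        then show ?thesis by (intro exI[of _ 0]) (simp add: v coeff_monom)
      qed
      then show "v \<in> ycomm_coeffs h" unfolding ycomm_coeffs_def by blast
    qed
    show "coeff_restrict (\<lambda>k. id k = i) m \<in> V i" if "m \<in> ycomm_coeffs h" for m i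
    proof -
      have "coeff_restrict (\<lambda>k. id k = i) m = monom (coeff m i) i"
        by (rule poly_eqI) (simp add: coeff_coeff_restrict coeff_monom)
      then show ?thesis using that unfolding ycomm_coeffs_def V_def by auto
    qed
  qed (auto simp: ycomm_coeffs_0 ycomm_coeffs_add)
  then have "is_dsum (yhat_eval h ` ycomm_coeffs h) (\<lambda>i. yhat_eval h ` V i)"
    using dsum_transport[where \<Phi> = "yhat_eval h", OF yhat_eval_add yhat_eval_eq_0[OF h]] by blast
  then show ?thesis unfolding family commset_yhat_eq .
qed

text \<open>y-hat coordinates with constant coefficients: the subalgebra F[y-hat].\<close>
definition const_coeffs :: "'a::field poly poly set" where
  "const_coeffs = {F. \<forall>i. degree (coeff F i) = 0}"

lemma const_coeff: "F \<in> const_coeffs \<Longrightarrow> coeff F i = [:coeff (coeff F i) 0:]"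
  unfolding const_coeffs_def by (simp add: degree_0_id)

lemma const_coeffs_add: "F \<in> const_coeffs \<Longrightarrow> G \<in> const_coeffs \<Longrightarrow> F + G \<in> const_coeffs"
proof -
  assume F: "F \<in> const_coeffs" and G: "G \<in> const_coeffs"
  have "degree (coeff (F + G) i) = 0" for i
    using degree_add_le_max[of "coeff F i" "coeff G i"] F G by (simp add: const_coeffs_def)
  then show ?thesis by (simp add: const_coeffs_def)
qed

lemma const_coeffs_smult: "F \<in> const_coeffs \<Longrightarrow> smult [:c:] F \<in> const_coeffs"
proof -
  assume F: "F \<in> const_coeffs"
  have "degree (coeff (smult [:c:] F) i) = 0" for i
    using degree_mult_le[of "[:c:]" "coeff F i"] F by (simp add: const_coeffs_def)
  then show ?thesis by (simp add: const_coeffs_def)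
qed

lemma const_coeffs_mult:
  assumes F: "F \<in> const_coeffs" and G: "G \<in> const_coeffs" shows "F * G \<in> const_coeffs"
  unfolding const_coeffs_def
proof (intro CollectI allI)
  fix n
  have "degree (coeff (F * G) n) \<le> 0"
    unfolding coeff_mult
  proof (rule degree_sum_le)
    fix i show "degree (coeff F i * coeff G (n - i)) \<le> 0"
      using degree_mult_le[of "coeff F i" "coeff G (n - i)"] F G by (simp add: const_coeffs_def)
  qed simp
  then show "degree (coeff (F * G) n) = 0" by simp
qed

text \<open>Multiplying by an element of F[y-hat] on the right is the polynomial product in y-hat
  coordinates (the constant coefficients commute with everything).\<close>
lemma wmult_yhat_eval_const:
  assumes "G \<in> const_coeffs"
  shows "wmult (yhat_eval h F) (yhat_eval h G) = yhat_eval h (F * G)"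
  using assms
proof (induct G rule: pCons_induct)
  case 0
  then show ?case by simp
next
  case (pCons b G)
  have "degree (coeff (pCons b G) (Suc i)) = 0" for i using pCons(3) unfolding const_coeffs_def by blast
  then have G: "G \<in> const_coeffs" by (simp add: const_coeffs_def)
  have b: "b = [:coeff b 0:]" using const_coeff[OF pCons(3), of 0] by simp
  have "wmult (yhat_eval h F) (smult b 1) = smult b (yhat_eval h F)"
    using wmult_smult_const_right[of _ "coeff b 0" 1] b by simp
  then have "wmult (yhat_eval h F) (yhat_eval h (pCons b G))
      = smult b (yhat_eval h F) + wmult (wmult (yhat_eval h F) (yhat_eval h G)) (yhat h)"
    by (simp add: yhat_eval_pCons wmult_add_right wmult_assoc)
  also have "\<dots> = yhat_eval h (F * pCons b G)"
    using pCons(2)[OF G] by (simp add: yhat_eval_add yhat_eval_smult yhat_eval_pCons)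
  finally show ?case .
qed

lemma gen_alg_yhat_subset: "gen_alg {yhat h} \<subseteq> yhat_eval h ` const_coeffs"
proof
  fix P assume "P \<in> gen_alg {yhat h}"
  then show "P \<in> yhat_eval h ` const_coeffs"
  proof induct
    case (gen s)
    have "yhat h = yhat_eval h (monom 1 1)" by (simp add: yhat_eval_monom)
    moreover have "monom 1 1 \<in> const_coeffs" by (simp add: const_coeffs_def coeff_monom)
    ultimately show ?case using gen by blast
  next
    case one
    have "yhat_eval h (monom 1 0) = 1" by (simp only: yhat_eval_monom) simp
    moreover have "monom 1 0 \<in> const_coeffs" by (simp add: const_coeffs_def coeff_monom)
    ultimately show ?case by (metis image_eqI)
  next
    case (scal a c)
    then obtain F where F: "F \<in> const_coeffs" "a = yhat_eval h F" by blast
    have "W [:c:] * a = yhat_eval h (smult [:c:] F)" by (simp add: F W_def yhat_eval_smult)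
    then show ?case using const_coeffs_smult[OF F(1)] by blast
  next
    case (add a b)
    then obtain F G where "F \<in> const_coeffs" "a = yhat_eval h F" "G \<in> const_coeffs" "b = yhat_eval h G"
      by blast
    then show ?case using const_coeffs_add by (auto simp flip: yhat_eval_add intro!: image_eqI)
  next
    case (mult a b)
    then obtain F G where "F \<in> const_coeffs" "a = yhat_eval h F" "G \<in> const_coeffs" "b = yhat_eval h G"
      by blast
    then show ?case using const_coeffs_mult by (auto simp: wmult_yhat_eval_const intro!: image_eqI)
  qed
qed

theorem gen_alg_yhat_eq: "gen_alg {yhat h} = yhat_eval h ` const_coeffs"
proof
  show "yhat_eval h ` const_coeffs \<subseteq> gen_alg {yhat h}"
  proof
    fix P assume "P \<in> yhat_eval h ` const_coeffs"
    then obtain F where F: "F \<in> const_coeffs" "P = yhat_eval h F" by blast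
    have "W [:coeff (coeff F i) 0:] * wpow (yhat h) i \<in> gen_alg {yhat h}" for i
      by (intro gen_alg.scal gen_alg_wpow) simp
    then have "smult (coeff F i) (wpow (yhat h) i) \<in> gen_alg {yhat h}" for i
      by (subst const_coeff[OF F(1)]) (simp add: W_def)
    then show "P \<in> gen_alg {yhat h}" unfolding F(2) yhat_eval_def by (intro gen_alg_sum)
  qed
qed (rule gen_alg_yhat_subset)

text \<open>y-hat coordinates of h x^j F[y-hat].\<close>
definition xpow_block :: "'a::field poly \<Rightarrow> nat \<Rightarrow> 'a poly poly set" where
  "xpow_block h j = {smult (h * monom 1 j) F | F. F \<in> const_coeffs}"

lemma coeff_xpow_block_elem:
  assumes "F \<in> const_coeffs"
  shows "coeff (smult (h * monom 1 j) F) i = h * monom (coeff (coeff F i) 0) j"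
proof -
  have "coeff (smult (h * monom 1 j) F) i = h * monom 1 j * [:coeff (coeff F i) 0:]"
    using const_coeff[OF assms, of i] by simp
  also have "\<dots> = h * monom (coeff (coeff F i) 0) j" by (simp add: smult_monom flip: mult_smult_right)
  finally show ?thesis .
qed

text \<open>h x^j is h times a derivative when p does not divide j + 1.\<close>
lemma xpow_block_subset:
  assumes "\<not> CHAR('a) dvd Suc j"
  shows "xpow_block (h :: 'a::field poly) j \<subseteq> ycomm_coeffs h"
proof
  fix v assume "v \<in> xpow_block h j"
  then obtain F where F: "F \<in> const_coeffs" "v = smult (h * monom 1 j) F" by (auto simp: xpow_block_def)
  have nz: "of_nat (Suc j) \<noteq> (0::'a)" using assms of_nat_eq_0_iff_char_dvd[of "Suc j"] by blast
  have "\<exists>f. coeff v i = pderiv f * h" for i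
  proof
    let ?c = "coeff (coeff F i) 0"
    show "coeff v i = pderiv (monom (?c / of_nat (Suc j)) (Suc j)) * h"
      using nz unfolding F(2) coeff_xpow_block_elem[OF F(1)] by (simp add: pderiv_monom mult.commute)
  qed
  then show "v \<in> ycomm_coeffs h" unfolding ycomm_coeffs_def by blast
qed

definition ycomm_block :: "'a::field poly \<Rightarrow> nat \<Rightarrow> 'a poly poly set" where
  "ycomm_block h j = (if CHAR('a) dvd Suc j then {0} else xpow_block h j)"

lemma ycomm_block_subset: "ycomm_block h j \<subseteq> ycomm_coeffs h"
  using xpow_block_subset[of j h] by (simp add: ycomm_block_def ycomm_coeffs_0)

definition xdeg_part :: "'a::field poly \<Rightarrow> nat \<Rightarrow> 'a poly poly \<Rightarrow> 'a poly poly" where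
  "xdeg_part h j m = smult h (map_poly (\<lambda>c. monom (coeff (c div h) j) j) m)"

lemma coeff_xdeg_part: "coeff (xdeg_part h j m) i = h * monom (coeff (coeff m i div h) j) j"
  by (simp add: xdeg_part_def coeff_map_poly)

lemma xdeg_part_add: "xdeg_part h j (a + b) = xdeg_part h j a + xdeg_part h j b"
  by (rule poly_eqI) (simp add: coeff_xdeg_part poly_div_add_left add_monom flip: distrib_left)

lemma xdeg_part_xpow_block:
  assumes h: "h \<noteq> 0" and F: "F \<in> const_coeffs"
  shows "xdeg_part h j' (smult (h * monom 1 j) F) = (if j' = j then smult (h * monom 1 j) F else 0)"
proof (rule poly_eqI)
  fix i
  have "coeff (xdeg_part h j' (smult (h * monom 1 j) F)) i
      = h * monom (coeff (monom (coeff (coeff F i) 0) j) j') j'"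
    using h by (simp only: coeff_xdeg_part coeff_xpow_block_elem[OF F]) simp
  then show "coeff (xdeg_part h j' (smult (h * monom 1 j) F)) i
      = coeff (if j' = j then smult (h * monom 1 j) F else 0) i"
    by (simp only: coeff_xpow_block_elem[OF F] split: if_split) (simp add: coeff_monom)
qed

lemma xdeg_part_ycomm_block:
  assumes h: "h \<noteq> 0" and v: "v \<in> ycomm_block h j"
  shows "xdeg_part h i v = (if i = j then v else 0)"
proof (cases "CHAR('a) dvd Suc j")
  case True
  then show ?thesis using v by (simp add: ycomm_block_def xdeg_part_def)
next
  case False
  then obtain F where "F \<in> const_coeffs" "v = smult (h * monom 1 j) F"
    using v by (auto simp: ycomm_block_def xpow_block_def)
  then show ?thesis using xdeg_part_xpow_block[OF h] by simp
qed

lemma ycomm_coeffs_xdeg_decomp: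
  assumes h: "h \<noteq> 0" and m: "m \<in> ycomm_coeffs h"
  shows "\<exists>n. m = (\<Sum>j<n. xdeg_part h j m)"
proof
  define g where "g i = coeff m i div h" for i
  have hg: "h * g i = coeff m i" for i
  proof -
    obtain f where "coeff m i = pderiv f * h" using m unfolding ycomm_coeffs_def by blast
    then show ?thesis using h by (simp add: g_def)
  qed
  define B where "B = (\<Sum>i\<le>degree m. degree (g i))"
  have g_deg: "degree (g i) < Suc B" for i
  proof (cases "i \<le> degree m")
    case True
    then have "degree (g i) \<le> B" unfolding B_def by (intro member_le_sum) auto
    then show ?thesis by simp
  next
    case False
    then show ?thesis by (simp add: g_def coeff_eq_0)
  qed
  show "m = (\<Sum>j<Suc B. xdeg_part h j m)"
  proof (rule poly_eqI)
    fix i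
    have "coeff (\<Sum>j<Suc B. xdeg_part h j m) i = h * (\<Sum>j<Suc B. monom (coeff (g i) j) j)"
      unfolding coeff_sum coeff_xdeg_part sum_distrib_left g_def ..
    also have "(\<Sum>j<Suc B. monom (coeff (g i) j) j) = g i"
      using g_deg[of i] by (simp add: poly_as_sum_of_monoms' lessThan_Suc_atMost)
    finally show "coeff m i = coeff (\<Sum>j<Suc B. xdeg_part h j m) i" using hg by simp
  qed
qed

text \<open>The x^j-component of h f' vanishes when p | j + 1, since then x^j has no antiderivative.\<close>
lemma xdeg_part_in_block:
  fixes h :: "'a::field poly"
  assumes h: "h \<noteq> 0" and m: "m \<in> ycomm_coeffs h"
  shows "xdeg_part h j m \<in> ycomm_block h j"
proof (cases "CHAR('a) dvd Suc j")
  case True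
  then have z: "of_nat (Suc j) = (0::'a)" by (simp only: of_nat_eq_0_iff_char_dvd)
  have "coeff (coeff m i div h) j = 0" for i
  proof -
    obtain f where "coeff m i = pderiv f * h" using m unfolding ycomm_coeffs_def by blast
    then show ?thesis using h z by (simp add: coeff_pderiv)
  qed
  then have "xdeg_part h j m = 0" by (intro poly_eqI) (simp add: coeff_xdeg_part)
  then show ?thesis using True by (simp add: ycomm_block_def)
next
  case False
  define F where "F = map_poly (\<lambda>c. [:coeff (c div h) j:]) m"
  have coeff_F: "coeff F i = [:coeff (coeff m i div h) j:]" for i
    unfolding F_def by (rule coeff_map_poly) simp
  have F: "F \<in> const_coeffs" by (simp add: const_coeffs_def coeff_F)
  have "xdeg_part h j m = smult (h * monom 1 j) F"
    by (rule poly_eqI) (simp only: coeff_xdeg_part coeff_xpow_block_elem[OF F] coeff_F, simp)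
  then show ?thesis using False F by (auto simp: ycomm_block_def xpow_block_def)
qed

lemma ycomm_coeffs_dsum_block:
  assumes h: "h \<noteq> 0"
  shows "is_dsum (ycomm_coeffs h) (ycomm_block h)"
proof (rule dsumI[where \<pi> = "xdeg_part h"])
  show "(\<Sum>i<n. v i) \<in> ycomm_coeffs h" if "\<forall>i<n. v i \<in> ycomm_block h i" for n v
    using that ycomm_block_subset by (intro closed_sum ycomm_coeffs_0 ycomm_coeffs_add) blast+
  show "\<exists>n. (\<forall>j<n. xdeg_part h j m \<in> ycomm_block h j) \<and> m = (\<Sum>j<n. xdeg_part h j m)"
    if "m \<in> ycomm_coeffs h" for m
    using ycomm_coeffs_xdeg_decomp[OF h that] xdeg_part_in_block[OF h that] by blast
  show "xdeg_part h j v = v" if "v \<in> ycomm_block h j" for j v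
    using xdeg_part_ycomm_block[OF h that] by simp
  show "xdeg_part h i v = 0" if "v \<in> ycomm_block h j" "i \<noteq> j" for i j v
    using xdeg_part_ycomm_block[OF h that(1)] that(2) by simp
qed (rule xdeg_part_add)

lemma ycomm_block_family:
  "(\<lambda>j. if (j + 1) mod CHAR('a) \<noteq> 0
      then {wmult (W h) (wmult (wpow WX j) q) | q. q \<in> gen_alg {yhat h}} else {0})
   = (\<lambda>j. yhat_eval (h :: 'a::field poly) ` ycomm_block h j)"
proof (rule ext)
  fix j
  have "{wmult (W h) (wmult (wpow WX j) q) | q. q \<in> gen_alg {yhat h}}
      = (\<lambda>q. wmult (W h) (wmult (wpow WX j) q)) ` (yhat_eval h ` const_coeffs)"
    by (simp only: gen_alg_yhat_eq Setcompr_eq_image)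
  also have "\<dots> = yhat_eval h ` (\<lambda>F. smult (h * monom 1 j) F) ` const_coeffs"
    by (simp only: image_image wpow_WX wmult_W yhat_eval_smult smult_smult)
  also have "\<dots> = yhat_eval h ` xpow_block h j"
    by (simp only: xpow_block_def Setcompr_eq_image)
  finally show "(if (j + 1) mod CHAR('a) \<noteq> 0
      then {wmult (W h) (wmult (wpow WX j) q) | q. q \<in> gen_alg {yhat h}} else {0})
      = yhat_eval h ` ycomm_block h j"
    by (simp add: ycomm_block_def mod_eq_0_iff_dvd)
qed

theorem commset_yhat_dsum_xpow:
  fixes h :: "'a::field poly"
  assumes h: "h \<noteq> 0"
  shows "is_dsum (commset h (yhat h))
           (\<lambda>j. if (j + 1) mod CHAR('a) \<noteq> 0
                then {wmult (W h) (wmult (wpow WX j) q) | q. q \<in> gen_alg {yhat h}} else {0})"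
  unfolding ycomm_block_family commset_yhat_eq
  using dsum_transport[where \<Phi> = "yhat_eval h", OF yhat_eval_add yhat_eval_eq_0[OF h]
      ycomm_coeffs_dsum_block[OF h]] .

theorem lemma6p3:
  fixes h :: "'a::field poly"
  assumes "h \<noteq> 0"
  shows "(CHAR('a) = 0 \<longrightarrow> Cx h = {W f | f. True})
    \<and> (CHAR('a) > 0 \<longrightarrow>
      (let p = CHAR('a) in
         Cx h = gen_alg {WX, wmult (W (h ^ p)) (wpow WY p)}
       \<and> is_dsum (Cx h)
           (\<lambda>i. if p dvd i then {wmult (W f) (wmult (W (h ^ i)) (wpow WY i)) | f. True} else {0})
       \<and> is_dsum (commset h WX)
           (\<lambda>i. if (i + 1) mod p \<noteq> 0
                then {wmult (W h) (wmult (W f) (wmult (W (h ^ i)) (wpow WY i))) | f. True} else {0})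
       \<and> is_dsum (commset h WX)
           (\<lambda>i. if i \<le> p - 2
                then {wmult (W h) (wmult c (wmult (W (h ^ i)) (wpow WY i))) | c. c \<in> Cx h} else {0})
       \<and> is_dsum (commset h (yhat h))
           (\<lambda>i. {wmult (W (pderiv f * h)) (wpow (yhat h) i) | f. True})
       \<and> is_dsum (commset h (yhat h))
           (\<lambda>j. if (j + 1) mod p \<noteq> 0
                then {wmult (W h) (wmult (wpow WX j) q) | q. q \<in> gen_alg {yhat h}} else {0})))"
  unfolding Let_def
  using Cx_char_0 Cx_gen_alg Cx_dsum commset_WX_dsum_monomials commset_WX_dsum_Cx[OF assms]
    commset_yhat_dsum_monomials[OF assms] commset_yhat_dsum_xpow[OF assms]
  by blast

end
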